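(* Let $\alpha$ be a proper fraction ($0<\alpha<1$), let $u=(u_k)$ be a sequence with $u_k\neq0$ for all $k$, let $A=(a_{nk})$ be an infinite matrix and define $B=(b_{nk})$ by $$b_{nk}=\sum_{j=0}^n\Big(\sum_{i=0}^{n-j}(-1)^i\frac{\Gamma(\alpha+1)}{i!\,\Gamma(\alpha+1-i)}u_{i+j}\Big)a_{jk}\qquad(n,k\in\mathbb{N}).$$ Then: (i) $A\in(\ell_\infty:c_0(\Gamma,\Delta^{(\alpha)},u))$ iff $\lim_{n\to\infty}\sum_k|b_{nk}|=0$. (ii) $A\in(c:c_0(\Gamma,\Delta^{(\alpha)},u))$ iff $\sup_n\sum_k|b_{nk}|<\infty$, $\lim_{k\to\infty}b_{nk}=0$ for each $n$, and $\lim_{n\to\infty}\sum_k b_{nk}=0$. (iii) $A\in(c_0:c_0(\Gamma,\Delta^{(\alpha)},u))$ iff $\sup_n\sum_k|b_{nk}|<\infty$ and $\lim_{k\to\infty}b_{nk}=0$ for each $n$. (iv) $A\in(\ell_1:c_0(\Gamma,\Delta^{(\alpha)},u))$ iff $\lim_{k\to\infty}b_{nk}=0$ for each $n$ and $\sup_{n,k}|b_{nk}|<\infty$. (v) $A\in(\ell_\infty:c(\Gamma,\Delta^{(\alpha)},u))$ iff $\lim_{n\to\infty}b_{nk}=\alpha_k$ exists for each $k$ and $\lim_{m\to\infty}\sum_k|b_{mk}|=\sum_k|\alpha_k|$. (vi) $A\in(c:c(\Gamma,\Delta^{(\alpha)},u))$ iff $\sup_n\sum_k|b_{nk}|<\infty$,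 $\lim_{n\to\infty}b_{nk}$ exists for each $k$, and $\lim_{n\to\infty}\sum_k b_{nk}$ exists. (vii) $A\in(c_0:c(\Gamma,\Delta^{(\alpha)},u))$ iff $\sup_n\sum_k|b_{nk}|<\infty$ and $\lim_{n\to\infty}b_{nk}$ exists for each $k$. (viii) $A\in(\ell_1:c(\Gamma,\Delta^{(\alpha)},u))$ iff $\lim_{n\to\infty}b_{nk}$ exists for each $k$ and $\sup_{n,k}|b_{nk}|<\infty$.
   Context: $\omega$ is the space of all real or complex sequences; $\ell_\infty$, $c$, $c_0$, $\ell_1$ are the bounded, convergent, null and absolutely summable sequences; $\mathbb{N}=\{0,1,2,\dots\}$; $\Gamma$ is the gamma function. For $x\in\omega$, $\Delta^{(\alpha)}x_k=\sum_{i=0}^{\infty}(-1)^i\frac{\Gamma(\alpha+1)}{i!\,\Gamma(\alpha+1-i)}x_{k-i}$ with $x_j=0$ for $j<0$. For $\mu\in\{c_0,c\}$, $\mu(\Gamma,\Delta^{(\alpha)},u)=\{x\in\omega:(\sum_{j=0}^k u_j\Delta^{(\alpha)}x_j)_k\in\mu\}$. For sequence spaces $X,Y$, $(X:Y)$ is the class of matrices $A$ such that for every $x\in X$ the series $(Ax)_n=\sum_k a_{nk}x_k$ converge for all $n$ and $Ax\in Y$. *)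

theory Defs
  imports "HOL-Analysis.Analysis"
begin

definition frac_coeff :: "real \<Rightarrow> nat \<Rightarrow> real" where
  "frac_coeff \<alpha> i = (-1) ^ i * Gamma (\<alpha> + 1) / (fact i * Gamma (\<alpha> + 1 - real i))"

text \<open>Fractional difference; terms with negative index are zero, so the sum is finite.\<close>
definition frac_diff :: "real \<Rightarrow> (nat \<Rightarrow> real) \<Rightarrow> nat \<Rightarrow> real" where
  "frac_diff \<alpha> x k = (\<Sum>i\<le>k. frac_coeff \<alpha> i * x (k - i))"

definition linf_space :: "(nat \<Rightarrow> real) set" where
  "linf_space = {x. bounded (range x)}"

definition c_space :: "(nat \<Rightarrow> real) set" where
  "c_space = {x. convergent x}"

definition c0_space :: "(nat \<Rightarrow> real) set" where
  "c0_space = {x. x \<longlonglongrightarrow> 0}"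

definition l1_space :: "(nat \<Rightarrow> real) set" where
  "l1_space = {x. summable (\<lambda>k. \<bar>x k\<bar>)}"

definition gen_space :: "(nat \<Rightarrow> real) set \<Rightarrow> real \<Rightarrow> (nat \<Rightarrow> real) \<Rightarrow> (nat \<Rightarrow> real) set" where
  "gen_space \<mu> \<alpha> u = {x. (\<lambda>k. \<Sum>j\<le>k. u j * frac_diff \<alpha> x j) \<in> \<mu>}"

definition matrix_class :: "(nat \<Rightarrow> real) set \<Rightarrow> (nat \<Rightarrow> real) set \<Rightarrow> (nat \<Rightarrow> nat \<Rightarrow> real) \<Rightarrow> bool" where
  "matrix_class X Y A \<longleftrightarrow>
     (\<forall>x\<in>X. (\<forall>n. summable (\<lambda>k. A n k * x k)) \<and> (\<lambda>n. \<Sum>k. A n k * x k) \<in> Y)"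

definition B_matrix :: "real \<Rightarrow> (nat \<Rightarrow> real) \<Rightarrow> (nat \<Rightarrow> nat \<Rightarrow> real) \<Rightarrow> nat \<Rightarrow> nat \<Rightarrow> real" where
  "B_matrix \<alpha> u A n k =
     (\<Sum>j\<le>n. (\<Sum>i\<le>n - j. frac_coeff \<alpha> i * u (i + j)) * A j k)"

end

theory Submission
  imports Defs
begin

text \<open>
  Applying \<open>\<Delta>^(\<alpha>)\<close> to \<open>A x\<close> and then forming the partial sums weighted by \<open>u\<close> gives \<open>B x\<close>:
  both are finite sums over the same triangle of indices. Row \<open>n\<close> of \<open>B\<close> is \<open>u n\<close> times row \<open>n\<close>
  of \<open>A\<close> plus a combination of earlier rows (the leading coefficient of \<open>\<Delta>^(\<alpha>)\<close> is
  \<open>\<Gamma>(\<alpha> + 1) / \<Gamma>(\<alpha> + 1) = 1\<close>), so \<open>A\<close> and \<open>B\<close> have the same summability domain and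
  \<open>A \<in> (X : \<mu>(\<Gamma>, \<Delta>^(\<alpha>), u))\<close> iff \<open>B \<in> (X : \<mu>)\<close>. The theorem is thus the classical
  characterisation of \<open>(X : c\<^sub>0)\<close> and \<open>(X : c)\<close> for \<open>X = \<ell>\<^sub>\<infinity>, c, c\<^sub>0, \<ell>\<^sub>1\<close>, applied to \<open>B\<close>;
  of \<open>0 < \<alpha> < 1\<close> only \<open>\<Gamma>(\<alpha> + 1) \<noteq> 0\<close> is used.

  Necessity comes from gliding hump arguments: if a condition fails, one chooses rows and disjoint
  blocks of columns on which these rows carry large mass, and builds a test sequence in \<open>X\<close> that
  follows the signs of the chosen rows on their blocks. Sufficiency comes from splitting each series
  into a finite head, where the columns converge, and a tail controlled by the uniform bounds
  (Tannery's theorem for \<open>\<ell>\<^sub>1\<close>, \<open>\<ell>\<^sub>1\<close>-convergence of the rows for \<open>\<ell>\<^sub>\<infinity>\<close>).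
\<close>

section \<open>Reduction to the matrix \<open>B\<close>\<close>

lemma frac_coeff_0: "Gamma (\<alpha> + 1) \<noteq> 0 \<Longrightarrow> frac_coeff \<alpha> 0 = 1"
  unfolding frac_coeff_def by simp

lemma sum_antidiagonal_swap:
  fixes F :: "nat \<Rightarrow> nat \<Rightarrow> 'a::comm_monoid_add"
  shows "(\<Sum>k\<le>n. \<Sum>i\<le>k. F i (k - i)) = (\<Sum>m\<le>n. \<Sum>i\<le>n - m. F i m)"
proof -
  have "(\<Sum>k\<le>n. \<Sum>i\<le>k. F i (k - i)) = (\<Sum>(i,m)\<in>{(i,m). i + m \<le> n}. F i m)"
    by (rule sum.triangle_reindex_eq[symmetric])
  also have "\<dots> = (\<Sum>(m,i)\<in>(SIGMA m:{..n}. {..n - m}). F i m)"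
    by (rule sum.reindex_bij_witness[where i="\<lambda>(m,i). (i,m)" and j="\<lambda>(i,m). (m,i)"]) auto
  also have "\<dots> = (\<Sum>m\<le>n. \<Sum>i\<le>n - m. F i m)"
    by (subst sum.Sigma[symmetric]) auto
  finally show ?thesis .
qed

lemma B_matrix_mult:
  "B_matrix \<alpha> u A n k * x k = (\<Sum>j\<le>n. (\<Sum>i\<le>n - j. frac_coeff \<alpha> i * u (i + j)) * (A j k * x k))"
  unfolding B_matrix_def by (simp add: sum_distrib_right mult.assoc)

lemma summable_rows_B_matrix_iff:
  assumes "frac_coeff \<alpha> 0 = 1" and "\<forall>k. u k \<noteq> 0"
  shows "(\<forall>n. summable (\<lambda>k. B_matrix \<alpha> u A n k * x k)) \<longleftrightarrow> (\<forall>n. summable (\<lambda>k. A n k * x k))"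
proof
  assume A: "\<forall>n. summable (\<lambda>k. A n k * x k)"
  show "\<forall>n. summable (\<lambda>k. B_matrix \<alpha> u A n k * x k)"
    unfolding B_matrix_mult by (intro allI summable_sum summable_mult A[rule_format])
next
  assume B: "\<forall>n. summable (\<lambda>k. B_matrix \<alpha> u A n k * x k)"
  show "\<forall>n. summable (\<lambda>k. A n k * x k)"
  proof
    fix n show "summable (\<lambda>k. A n k * x k)"
    proof (induction n rule: less_induct)
      case (less n)
      let ?d = "\<lambda>j. \<Sum>i\<le>n - j. frac_coeff \<alpha> i * u (i + j)"
      have "?d n = u n" using assms(1) by simp
      then have "A n k * x k = (B_matrix \<alpha> u A n k * x k - (\<Sum>j<n. ?d j * (A j k * x k))) / u n" for k
        unfolding B_matrix_mult using assms(2)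
        by (simp add: lessThan_Suc_atMost[symmetric] field_simps)
      moreover have "summable (\<lambda>k. (B_matrix \<alpha> u A n k * x k - (\<Sum>j<n. ?d j * (A j k * x k))) / u n)"
        by (intro summable_divide summable_diff B[rule_format] summable_sum summable_mult less) auto
      ultimately show ?case by simp
    qed
  qed
qed

lemma gen_space_transform_eq_B_matrix:
  assumes "\<forall>n. summable (\<lambda>k. A n k * x k)"
  shows "(\<Sum>j\<le>n. u j * frac_diff \<alpha> (\<lambda>m. \<Sum>k. A m k * x k) j) = (\<Sum>k. B_matrix \<alpha> u A n k * x k)"
proof -
  let ?y = "\<lambda>m. \<Sum>k. A m k * x k"
  let ?d = "\<lambda>m. \<Sum>i\<le>n - m. frac_coeff \<alpha> i * u (i + m)"
  have "(\<Sum>j\<le>n. u j * frac_diff \<alpha> ?y j) = (\<Sum>j\<le>n. \<Sum>i\<le>j. frac_coeff \<alpha> i * u (i + (j - i)) * ?y (j - i))"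
    unfolding frac_diff_def sum_distrib_left by (intro sum.cong refl) (auto simp: mult_ac)
  also have "\<dots> = (\<Sum>m\<le>n. \<Sum>i\<le>n - m. frac_coeff \<alpha> i * u (i + m) * ?y m)"
    by (rule sum_antidiagonal_swap)
  also have "\<dots> = (\<Sum>m\<le>n. ?d m * ?y m)"
    by (simp add: sum_distrib_right)
  also have "\<dots> = (\<Sum>m\<le>n. \<Sum>k. ?d m * (A m k * x k))"
    by (intro sum.cong refl suminf_mult[symmetric] assms[rule_format])
  also have "\<dots> = (\<Sum>k. \<Sum>m\<le>n. ?d m * (A m k * x k))"
    by (rule suminf_sum[symmetric]) (intro summable_mult assms[rule_format])
  also have "\<dots> = (\<Sum>k. B_matrix \<alpha> u A n k * x k)"
    unfolding B_matrix_mult ..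
  finally show ?thesis .
qed

lemma matrix_class_gen_space_iff:
  assumes "frac_coeff \<alpha> 0 = 1" and "\<forall>k. u k \<noteq> 0"
  shows "matrix_class X (gen_space \<mu> \<alpha> u) A \<longleftrightarrow> matrix_class X \<mu> (B_matrix \<alpha> u A)"
  unfolding matrix_class_def gen_space_def
  using summable_rows_B_matrix_iff[OF assms] gen_space_transform_eq_B_matrix
  by (auto simp del: B_matrix_def)

lemma linf_space_iff: "x \<in> linf_space \<longleftrightarrow> (\<exists>B. \<forall>k. \<bar>x k\<bar> \<le> B)"
  unfolding linf_space_def bounded_iff by auto

lemma c0_space_iff: "x \<in> c0_space \<longleftrightarrow> x \<longlonglongrightarrow> 0"
  by (simp add: c0_space_def)

lemma c_space_iff: "x \<in> c_space \<longleftrightarrow> (\<exists>l. x \<longlonglongrightarrow> l)"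
  by (simp add: c_space_def convergent_def)

lemma l1_space_iff: "x \<in> l1_space \<longleftrightarrow> summable (\<lambda>k. \<bar>x k\<bar>)"
  by (simp add: l1_space_def)

lemma bounded_if_tendsto:
  fixes x :: "nat \<Rightarrow> real"
  shows "x \<longlonglongrightarrow> l \<Longrightarrow> \<exists>X. \<forall>k. \<bar>x k\<bar> \<le> X"
  by (metis BseqE convergentI convergent_imp_Bseq real_norm_def)

lemma c0_subset_c: "c0_space \<subseteq> c_space"
  by (auto simp: c0_space_iff c_space_iff)

lemma c_subset_linf: "c_space \<subseteq> linf_space"
  using bounded_if_tendsto by (auto simp: c_space_iff linf_space_iff)

lemma c0_subset_linf: "c0_space \<subseteq> linf_space"
  using c0_subset_c c_subset_linf by blast

lemma matrix_class_mono: "X' \<subseteq> X \<Longrightarrow> Y \<subseteq> Y' \<Longrightarrow> matrix_class X Y M \<Longrightarrow> matrix_class X' Y' M"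
  unfolding matrix_class_def by blast

definition unit_seq :: "nat \<Rightarrow> nat \<Rightarrow> real" where
  "unit_seq k j = (if j = k then 1 else 0)"

lemma sums_mult_unit_seq: "(\<lambda>j. f j * unit_seq k j) sums f k"
proof -
  have "(\<lambda>j. f j * unit_seq k j) = (\<lambda>j. if j = k then f j else 0)"
    by (auto simp: unit_seq_def fun_eq_iff)
  then show ?thesis using sums_single[of k f] by simp
qed

lemma unit_seq_in_l1: "unit_seq k \<in> l1_space"
  using sums_summable[OF sums_mult_unit_seq[of "\<lambda>_. 1" k]]
  by (simp add: l1_space_iff unit_seq_def)

lemma unit_seq_in_c0: "unit_seq k \<in> c0_space"
  unfolding c0_space_iff by (rule LIMSEQ_offset[of _ "Suc k"]) (simp add: unit_seq_def)

lemma matrix_class_column: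
  "matrix_class X Y M \<Longrightarrow> unit_seq k \<in> X \<Longrightarrow> (\<lambda>n. M n k) \<in> Y"
  unfolding matrix_class_def using sums_unique[OF sums_mult_unit_seq[of "M _" k]] by auto

lemma matrix_class_column_bounded:
  assumes "matrix_class X Y M" and "unit_seq k \<in> X" and "Y \<subseteq> linf_space"
  shows "\<exists>B. \<forall>n. \<bar>M n k\<bar> \<le> B"
  using matrix_class_column[OF assms(1,2)] assms(3) by (auto simp: linf_space_iff)

lemma matrix_class_row_sums: "matrix_class c_space Y M \<Longrightarrow> (\<lambda>n. \<Sum>k. M n k) \<in> Y"
proof -
  assume "matrix_class c_space Y M"
  moreover have "(\<lambda>_. 1) \<in> c_space" by (auto simp: c_space_iff)
  ultimately show ?thesis unfolding matrix_class_def by fastforce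
qed

lemma matrix_class_c0I:
  assumes "\<And>x. x \<in> X \<Longrightarrow> (\<forall>n. summable (\<lambda>k. M n k * x k)) \<and> (\<lambda>n. \<Sum>k. M n k * x k) \<longlonglongrightarrow> 0"
  shows "matrix_class X c0_space M"
  using assms by (simp add: matrix_class_def c0_space_iff)

lemma matrix_class_cI:
  assumes "\<And>x. x \<in> X \<Longrightarrow> (\<forall>n. summable (\<lambda>k. M n k * x k)) \<and> (\<lambda>n. \<Sum>k. M n k * x k) \<longlonglongrightarrow> L x"
  shows "matrix_class X c_space M"
  using assms by (auto simp: matrix_class_def c_space_iff)

lemma summable_mult_bounded:
  fixes r x :: "nat \<Rightarrow> real"
  assumes "summable (\<lambda>k. \<bar>r k\<bar>)" and "\<forall>k. \<bar>x k\<bar> \<le> X"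
  shows "summable (\<lambda>k. r k * x k)"
proof (rule summable_comparison_test'[of "\<lambda>k. X * \<bar>r k\<bar>"])
  show "summable (\<lambda>k. X * \<bar>r k\<bar>)" using assms(1) by (rule summable_mult)
  show "norm (r k * x k) \<le> X * \<bar>r k\<bar>" for k
    using mult_right_mono[OF assms(2)[rule_format, of k] abs_ge_zero[of "r k"]]
    by (simp add: abs_mult mult.commute)
qed

lemma abs_sum_mult_bounded_le:
  fixes r x :: "nat \<Rightarrow> real"
  assumes "\<forall>k. \<bar>x k\<bar> \<le> X"
  shows "\<bar>\<Sum>k\<in>S. r k * x k\<bar> \<le> X * (\<Sum>k\<in>S. \<bar>r k\<bar>)"
proof -
  have "\<bar>\<Sum>k\<in>S. r k * x k\<bar> \<le> (\<Sum>k\<in>S. \<bar>r k\<bar> * \<bar>x k\<bar>)"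
    using sum_abs[of "\<lambda>k. r k * x k" S] by (simp add: abs_mult)
  also have "\<dots> \<le> (\<Sum>k\<in>S. \<bar>r k\<bar> * X)"
    using assms by (intro sum_mono mult_left_mono) auto
  finally show ?thesis by (simp add: sum_distrib_left mult.commute)
qed

lemma abs_suminf_mult_bounded_le:
  fixes r x :: "nat \<Rightarrow> real"
  assumes r: "summable (\<lambda>k. \<bar>r k\<bar>)" and x: "\<forall>k. \<bar>x k\<bar> \<le> X"
  shows "\<bar>\<Sum>k. r k * x k\<bar> \<le> X * (\<Sum>k. \<bar>r k\<bar>)"
proof -
  have "(\<lambda>n. \<bar>\<Sum>k<n. r k * x k\<bar>) \<longlonglongrightarrow> \<bar>\<Sum>k. r k * x k\<bar>"
    by (intro tendsto_rabs summable_LIMSEQ summable_mult_bounded[OF r x])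
  moreover have "(\<lambda>n. X * (\<Sum>k<n. \<bar>r k\<bar>)) \<longlonglongrightarrow> X * (\<Sum>k. \<bar>r k\<bar>)"
    by (intro tendsto_mult_left summable_LIMSEQ r)
  ultimately show ?thesis
    by (rule LIMSEQ_le) (use abs_sum_mult_bounded_le[OF x] in auto)
qed

lemma abs_suminf_tail_mult_le:
  fixes r x :: "nat \<Rightarrow> real"
  assumes "summable (\<lambda>k. \<bar>r k\<bar>)" and "\<And>k. K \<le> k \<Longrightarrow> \<bar>x k\<bar> \<le> X"
  shows "\<bar>\<Sum>i. r (i + K) * x (i + K)\<bar> \<le> X * (\<Sum>i. \<bar>r (i + K)\<bar>)"
  using abs_suminf_mult_bounded_le[of "\<lambda>i. r (i + K)" "\<lambda>i. x (i + K)" X] assms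
  by (simp add: summable_iff_shift[where f="\<lambda>k. \<bar>r k\<bar>"])

lemma suminf_split_block:
  fixes f :: "nat \<Rightarrow> real"
  assumes "summable f" and "A \<le> B"
  shows "suminf f = (\<Sum>k<A. f k) + (\<Sum>k\<in>{A..<B}. f k) + (\<Sum>i. f (i + B))"
proof -
  have "(\<Sum>k<B. f k) = (\<Sum>k<A. f k) + (\<Sum>k\<in>{A..<B}. f k)"
    using sum.atLeastLessThan_concat[OF _ assms(2), of 0 f] by (simp add: atLeast0LessThan)
  then show ?thesis using suminf_split_initial_segment[OF assms(1), of B] by simp
qed

lemma block_sums_tendsto_zero:
  fixes f :: "nat \<Rightarrow> real"
  assumes "summable f" and "strict_mono Ks"
  shows "(\<lambda>j. \<Sum>k\<in>{Ks j..<Ks (Suc j)}. f k) \<longlonglongrightarrow> 0"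
proof -
  let ?S = "\<lambda>n. \<Sum>k<n. f k"
  have "(\<lambda>j. ?S (Ks j)) \<longlonglongrightarrow> suminf f"
    using LIMSEQ_subseq_LIMSEQ[OF summable_LIMSEQ[OF assms(1)] assms(2)] by (simp add: o_def)
  then have "(\<lambda>j. ?S (Ks (Suc j)) - ?S (Ks j)) \<longlonglongrightarrow> suminf f - suminf f"
    by (intro tendsto_diff LIMSEQ_Suc)
  moreover have "?S (Ks (Suc j)) - ?S (Ks j) = (\<Sum>k\<in>{Ks j..<Ks (Suc j)}. f k)" for j
    using sum.atLeastLessThan_concat[of 0 "Ks j" "Ks (Suc j)" f] strict_mono_less_eq[OF assms(2)]
    by (simp add: atLeast0LessThan)
  ultimately show ?thesis by simp
qed

lemma summable_tail_le:
  fixes f :: "nat \<Rightarrow> real"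
  assumes "summable (\<lambda>k. \<bar>f k\<bar>)" and "0 < e"
  shows "\<exists>K'>K. (\<Sum>i. \<bar>f (i + K')\<bar>) \<le> e"
proof -
  obtain N where "\<forall>m\<ge>N. norm (\<Sum>i. \<bar>f (i + m)\<bar>) < e"
    using suminf_exist_split[OF assms(2,1)] by blast
  then have "\<bar>\<Sum>i. \<bar>f (i + max N (Suc K))\<bar>\<bar> < e" by simp
  then show ?thesis by (intro exI[of _ "max N (Suc K)"]) auto
qed

lemma summable_abs_diff:
  fixes f g :: "nat \<Rightarrow> real"
  assumes "summable (\<lambda>k. \<bar>f k\<bar>)" and "summable (\<lambda>k. \<bar>g k\<bar>)"
  shows "summable (\<lambda>k. \<bar>f k - g k\<bar>)"
  by (rule summable_comparison_test'[OF summable_add[OF assms]]) auto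

lemma abs_diff_suminf_abs_le:
  fixes f g :: "nat \<Rightarrow> real"
  assumes f: "summable (\<lambda>k. \<bar>f k\<bar>)" and g: "summable (\<lambda>k. \<bar>g k\<bar>)"
  shows "\<bar>(\<Sum>k. \<bar>f k\<bar>) - (\<Sum>k. \<bar>g k\<bar>)\<bar> \<le> (\<Sum>k. \<bar>f k - g k\<bar>)"
proof -
  have fg: "summable (\<lambda>k. \<bar>f k - g k\<bar>)" by (rule summable_abs_diff[OF f g])
  have "(\<Sum>k. \<bar>f k\<bar>) \<le> (\<Sum>k. \<bar>f k - g k\<bar> + \<bar>g k\<bar>)"
    by (rule suminf_le) (auto intro: summable_add fg g f)
  moreover have "(\<Sum>k. \<bar>g k\<bar>) \<le> (\<Sum>k. \<bar>f k - g k\<bar> + \<bar>f k\<bar>)"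
    by (rule suminf_le) (auto intro: summable_add fg g f)
  ultimately show ?thesis using suminf_add[OF fg f] suminf_add[OF fg g] by linarith
qed

lemma suminf_abs_diff_le:
  fixes f g :: "nat \<Rightarrow> real"
  assumes f: "summable (\<lambda>k. \<bar>f k\<bar>)" and g: "summable (\<lambda>k. \<bar>g k\<bar>)"
  shows "(\<Sum>k. \<bar>f k - g k\<bar>) \<le> (\<Sum>k. \<bar>f k\<bar>) + (\<Sum>k. \<bar>g k\<bar>)"
  using suminf_le[OF _ summable_abs_diff[OF f g] summable_add[OF f g]] suminf_add[OF f g]
  by (simp add: abs_triangle_ineq4)

lemma suminf_abs_diff_le_split:
  fixes f g :: "nat \<Rightarrow> real"
  assumes f: "summable (\<lambda>k. \<bar>f k\<bar>)" and g: "summable (\<lambda>k. \<bar>g k\<bar>)"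
  shows "(\<Sum>k. \<bar>f k - g k\<bar>)
    \<le> (\<Sum>k<K. \<bar>f k - g k\<bar>) + ((\<Sum>k. \<bar>f k\<bar>) - (\<Sum>k<K. \<bar>f k\<bar>)) + (\<Sum>i. \<bar>g (i + K)\<bar>)"
proof -
  have shift: "summable (\<lambda>i. \<bar>h (i + K)\<bar>)" if "summable (\<lambda>k. \<bar>h k\<bar>)" for h :: "nat \<Rightarrow> real"
    using that by (simp add: summable_iff_shift[where f="\<lambda>k. \<bar>h k\<bar>"])
  have "(\<Sum>i. \<bar>f (i + K) - g (i + K)\<bar>) \<le> (\<Sum>i. \<bar>f (i + K)\<bar>) + (\<Sum>i. \<bar>g (i + K)\<bar>)"
    by (rule suminf_abs_diff_le[OF shift[OF f] shift[OF g]])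
  then show ?thesis
    using suminf_split_initial_segment[OF summable_abs_diff[OF f g], of K]
      suminf_split_initial_segment[OF f, of K] by simp
qed

lemma suminf_mult_diff:
  fixes f g x :: "nat \<Rightarrow> real"
  assumes "summable (\<lambda>k. \<bar>f k\<bar>)" and "summable (\<lambda>k. \<bar>g k\<bar>)" and "\<forall>k. \<bar>x k\<bar> \<le> X"
  shows "(\<Sum>k. (f k - g k) * x k) = (\<Sum>k. f k * x k) - (\<Sum>k. g k * x k)"
  using suminf_diff[OF summable_mult_bounded[OF assms(1,3)] summable_mult_bounded[OF assms(2,3)]]
  by (simp add: left_diff_distrib)

lemma frequently_ge_if_unbounded:
  fixes g :: "nat \<Rightarrow> real"
  assumes "\<not> (\<exists>B. \<forall>n. g n \<le> B)"
  shows "\<exists>n\<ge>N. T \<le> g n"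
proof (rule ccontr)
  assume "\<not> ?thesis"
  then have small: "g n < T" if "N \<le> n" for n using that by (meson not_le)
  have "g n \<le> max T (Max (g ` {..<N}))" for n
  proof (cases "n < N")
    case True
    then show ?thesis by (intro max.coboundedI2 Max_ge) auto
  next
    case False
    then show ?thesis using small[of n] by simp
  qed
  with assms show False by blast
qed

lemma frequently_ge_if_not_tendsto_zero:
  fixes g :: "nat \<Rightarrow> real"
  assumes "\<And>n. 0 \<le> g n" and "\<not> g \<longlonglongrightarrow> 0"
  obtains d where "0 < d" and "\<And>N. \<exists>n\<ge>N. d \<le> g n"
proof -
  have "\<exists>d>0. \<forall>N. \<exists>n\<ge>N. d \<le> g n"
  proof (rule ccontr)
    assume "\<not> ?thesis"
    then have "\<exists>N. \<forall>n\<ge>N. norm (g n - 0) < d" if "0 < d" for d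
      using that assms(1) by (metis not_le real_norm_def diff_zero abs_of_nonneg)
    then have "g \<longlonglongrightarrow> 0" by (rule LIMSEQ_I)
    with assms(2) show False ..
  qed
  with that show ?thesis by blast
qed

section \<open>Gliding humps\<close>

text \<open>\<open>P j K n K'\<close> says that the \<open>j\<close>-th hump, in row \<open>n\<close>, occupies the columns \<open>[K, K')\<close>.\<close>
lemma gliding_hump_sequences:
  fixes P :: "nat \<Rightarrow> nat \<Rightarrow> nat \<Rightarrow> nat \<Rightarrow> bool"
  assumes hump: "\<And>j K N. \<exists>n\<ge>N. \<exists>K'>K. P j K n K'"
  shows "\<exists>ns Ks. strict_mono ns \<and> strict_mono Ks \<and> (\<forall>j. P j (Ks j) (ns j) (Ks (Suc j)))"
proof -
  let ?P = "\<lambda>j (K, n, K'). K < K' \<and> P j K n K'"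
  let ?Q = "\<lambda>j (K, n, K') (K2, n2, K2'). K2 = K' \<and> n < n2"
  have "\<exists>f. \<forall>j. ?P j (f j) \<and> ?Q j (f j) (f (Suc j))"
  proof (rule dependent_nat_choice)
    show "\<exists>t. ?P 0 t" using hump[where j=0 and K=0 and N=0] by auto
    show "\<exists>t'. ?P (Suc j) t' \<and> ?Q j t t'" if "?P j t" for t j
      using hump[where j="Suc j" and K="snd (snd t)" and N="Suc (fst (snd t))"]
      by (cases t) (auto simp: Suc_le_eq)
  qed
  then obtain f where f: "\<And>j. ?P j (f j) \<and> ?Q j (f j) (f (Suc j))" by blast
  define Ks where "Ks j = fst (f j)" for j
  define ns where "ns j = fst (snd (f j))" for j
  have "Ks (Suc j) = snd (snd (f j))" "Ks j < Ks (Suc j)" "ns j < ns (Suc j)"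
    "P j (Ks j) (ns j) (Ks (Suc j))" for j
    using f[of j] by (auto simp: Ks_def ns_def split: prod.splits)
  then show ?thesis by (intro exI[of _ ns] exI[of _ Ks]) (auto intro: strict_monoI_Suc)
qed

lemma strict_mono_choice:
  fixes Q :: "nat \<Rightarrow> nat \<Rightarrow> bool"
  assumes "\<And>j N. \<exists>n\<ge>N. Q j n"
  shows "\<exists>s. strict_mono s \<and> (\<forall>j. Q j (s j))"
proof -
  have "\<exists>s. \<forall>j. Q j (s j) \<and> s j < s (Suc j)"
  proof (rule dependent_nat_choice)
    show "\<exists>n. Q 0 n" using assms[where j=0 and N=0] by blast
    show "\<exists>m. Q (Suc j) m \<and> n < m" for n j
      using assms[where j="Suc j" and N="Suc n"] by (auto simp: Suc_le_eq)
  qed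
  then show ?thesis by (auto intro: strict_monoI_Suc)
qed

lemma humps_with_small_tails:
  fixes M :: "nat \<Rightarrow> nat \<Rightarrow> real"
  assumes rows: "\<And>n. summable (\<lambda>k. \<bar>M n k\<bar>)" and "0 < e"
    and often: "\<And>j K N. \<exists>n\<ge>N. Q j K n"
  obtains ns Ks where "strict_mono ns" and "strict_mono Ks" and "\<And>j. Q j (Ks j) (ns j)"
    and "\<And>j. (\<Sum>i. \<bar>M (ns j) (i + Ks (Suc j))\<bar>) \<le> e"
proof -
  have "\<exists>n\<ge>N. \<exists>K'>K. Q j K n \<and> (\<Sum>i. \<bar>M n (i + K')\<bar>) \<le> e" for j K N
  proof -
    obtain n where "N \<le> n" "Q j K n" using often by blast
    moreover obtain K' where "K < K'" "(\<Sum>i. \<bar>M n (i + K')\<bar>) \<le> e"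
      using summable_tail_le[OF rows \<open>0 < e\<close>] by blast
    ultimately show ?thesis by blast
  qed
  then show ?thesis
    using gliding_hump_sequences[of "\<lambda>j K n K'. Q j K n \<and> (\<Sum>i. \<bar>M n (i + K')\<bar>) \<le> e"] that
    by blast
qed

definition block_index :: "(nat \<Rightarrow> nat) \<Rightarrow> nat \<Rightarrow> nat" where
  "block_index Ks k = (LEAST j. k < Ks (Suc j))"

lemma block_index_less:
  assumes "strict_mono Ks"
  shows "k < Ks (Suc (block_index Ks k))"
  unfolding block_index_def
  by (rule LeastI[of _ k]) (use strict_mono_imp_increasing[OF assms, of "Suc k"] in simp)

lemma block_index_ge:
  assumes "strict_mono Ks" and "Ks j \<le> k"
  shows "j \<le> block_index Ks k"
  using block_index_less[OF assms(1), of k] assms strict_mono_less[OF assms(1)]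
  by (metis leD not_less_eq_eq order.strict_trans1)

lemma block_index_eq:
  assumes "strict_mono Ks" and "k \<in> {Ks j..<Ks (Suc j)}"
  shows "block_index Ks k = j"
  unfolding block_index_def
proof (rule Least_equality)
  show "k < Ks (Suc j)" using assms(2) by simp
  show "j \<le> i" if "k < Ks (Suc i)" for i
    using that assms strict_mono_less[OF assms(1), of j "Suc i"] by auto
qed

lemma tendsto_zero_if_block_decay:
  fixes x :: "nat \<Rightarrow> real"
  assumes "strict_mono Ks" and "\<forall>k. \<bar>x k\<bar> \<le> 1 / (real (block_index Ks k) + 1)"
  shows "x \<longlonglongrightarrow> 0"
proof -
  have "filterlim (block_index Ks) at_top sequentially"
    unfolding filterlim_at_top
    by (intro allI eventually_sequentiallyI[of "Ks _"]) (rule block_index_ge[OF assms(1)])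
  moreover have "(\<lambda>j. 1 / (real j + 1)) \<longlonglongrightarrow> 0"
    using LIMSEQ_inverse_real_of_nat by (simp add: inverse_eq_divide add.commute)
  ultimately have "(\<lambda>k. 1 / (real (block_index Ks k) + 1)) \<longlonglongrightarrow> 0"
    by (rule filterlim_compose[rotated])
  then show ?thesis
    by (rule Lim_null_comparison[rotated]) (use assms(2) in auto)
qed

lemma block_sign_estimate:
  fixes r x :: "nat \<Rightarrow> real"
  assumes r: "summable (\<lambda>k. \<bar>r k\<bar>)" and x: "\<forall>k. \<bar>x k\<bar> \<le> 1" and "A \<le> B"
    and block: "\<forall>k\<in>{A..<B}. x k = w * sgn (r k)"
  shows "\<bar>(\<Sum>k. r k * x k) - w * (\<Sum>k\<in>{A..<B}. \<bar>r k\<bar>)\<bar>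
           \<le> (\<Sum>k<A. \<bar>r k\<bar>) + (\<Sum>i. \<bar>r (i + B)\<bar>)"
proof -
  have "(\<Sum>k\<in>{A..<B}. r k * x k) = w * (\<Sum>k\<in>{A..<B}. \<bar>r k\<bar>)"
    unfolding sum_distrib_left by (intro sum.cong refl) (use block in \<open>auto simp: abs_sgn\<close>)
  moreover have "\<bar>\<Sum>k<A. r k * x k\<bar> \<le> (\<Sum>k<A. \<bar>r k\<bar>)"
    using abs_sum_mult_bounded_le[OF x, of r] by simp
  moreover have "\<bar>\<Sum>i. r (i + B) * x (i + B)\<bar> \<le> (\<Sum>i. \<bar>r (i + B)\<bar>)"
    using abs_suminf_tail_mult_le[OF r, of B x 1] x by simp
  ultimately show ?thesis
    using suminf_split_block[OF summable_mult_bounded[OF r x] \<open>A \<le> B\<close>] by linarith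
qed

definition sparse_seq :: "(nat \<Rightarrow> nat) \<Rightarrow> (nat \<Rightarrow> real) \<Rightarrow> nat \<Rightarrow> real" where
  "sparse_seq s v k = (if k \<in> range s then v (inv s k) else 0)"

lemma sparse_seq_at:
  assumes "strict_mono s"
  shows "sparse_seq s v (s j) = v j"
  using inv_f_f[OF strict_mono_imp_inj_on[OF assms]] by (simp add: sparse_seq_def)

lemma summable_abs_sparse_seq:
  assumes "strict_mono s" and "summable (\<lambda>j. \<bar>v j\<bar>)"
  shows "summable (\<lambda>k. \<bar>sparse_seq s v k\<bar>)"
  using summable_mono_reindex[OF assms(1), of "\<lambda>k. \<bar>sparse_seq s v k\<bar>"] assms
  by (simp add: sparse_seq_def strict_mono_imp_inj_on)

lemma sums_sparse_seq:
  assumes "strict_mono s" and "summable (\<lambda>k. r k * sparse_seq s v k)"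
  shows "(\<lambda>j. r (s j) * v j) sums (\<Sum>k. r k * sparse_seq s v k)"
  using sums_mono_reindex[OF assms(1), of "\<lambda>k. r k * sparse_seq s v k"] assms
  by (simp add: sparse_seq_def strict_mono_imp_inj_on summable_sums)

lemma geometric_hump_estimate:
  fixes g :: "nat \<Rightarrow> real"
  assumes "g sums S" and peak: "g j = m * (1/4) ^ j"
    and tail: "\<And>i. j < i \<Longrightarrow> \<bar>g i\<bar> \<le> 2 * m * (1/4) ^ i"
  shows "m * (1/4) ^ j \<le> 3 * (S + (\<Sum>i<j. \<bar>g i\<bar>))"
proof -
  let ?c = "2 * m * (1/4) ^ Suc j"
  have geom: "(\<lambda>i. ?c * (1/4) ^ i) sums (?c * (4/3))"
    using sums_mult[OF geometric_sums[of "1/4 :: real"], of ?c] by simp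
  have tail_le: "\<bar>g (i + Suc j)\<bar> \<le> ?c * (1/4) ^ i" for i
    using tail[of "i + Suc j"] by (simp add: power_add mult_ac)
  then have "summable (\<lambda>i. \<bar>g (i + Suc j)\<bar>)"
    by (intro summable_comparison_test'[OF sums_summable[OF geom]]) simp
  then have "\<bar>\<Sum>i. g (i + Suc j)\<bar> \<le> ?c * (4/3)"
    using summable_rabs[of "\<lambda>i. g (i + Suc j)"] suminf_le[OF tail_le _ sums_summable[OF geom]]
      sums_unique[OF geom] by fastforce
  moreover have "S = (\<Sum>i<j. g i) + g j + (\<Sum>i. g (i + Suc j))"
    using suminf_split_initial_segment[OF sums_summable[OF assms(1)], of "Suc j"] sums_unique[OF assms(1)]
    by simp
  moreover have "(\<Sum>i<j. g i) \<ge> - (\<Sum>i<j. \<bar>g i\<bar>)"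
    using sum_abs[of g "{..<j}"] by (simp add: abs_le_iff)
  ultimately show ?thesis using peak by (simp add: abs_le_iff)
qed

lemma sparse_hump_estimate:
  fixes r v :: "nat \<Rightarrow> real"
  assumes s: "strict_mono s" and sm: "summable (\<lambda>k. r k * sparse_seq s v k)"
    and v: "\<And>i. \<bar>v i\<bar> \<le> (1/4) ^ i" and peak: "r (s j) * v j = \<bar>r (s j)\<bar> * (1/4) ^ j"
    and later: "\<And>i. j < i \<Longrightarrow> \<bar>r (s i)\<bar> \<le> 2 * \<bar>r (s j)\<bar>"
  shows "\<bar>r (s j)\<bar> * (1/4) ^ j \<le> 3 * ((\<Sum>k. r k * sparse_seq s v k) + (\<Sum>i<j. \<bar>r (s i)\<bar>))"
proof -
  have g: "\<bar>r (s i) * v i\<bar> \<le> \<bar>r (s i)\<bar> * (1/4) ^ i" for i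
    using v by (simp add: abs_mult mult_left_mono)
  have "\<bar>r (s j)\<bar> * (1/4) ^ j
      \<le> 3 * ((\<Sum>k. r k * sparse_seq s v k) + (\<Sum>i<j. \<bar>r (s i) * v i\<bar>))"
  proof (rule geometric_hump_estimate[OF sums_sparse_seq[OF s sm] peak])
    show "\<bar>r (s i) * v i\<bar> \<le> 2 * \<bar>r (s j)\<bar> * (1/4) ^ i" if "j < i" for i
      by (rule order_trans[OF g mult_right_mono[OF later[OF that]]]) simp
  qed
  moreover have "\<bar>r (s i)\<bar> * (1/4) ^ i \<le> \<bar>r (s i)\<bar>" for i
    by (intro mult_left_le power_le_one) auto
  then have "(\<Sum>i<j. \<bar>r (s i) * v i\<bar>) \<le> (\<Sum>i<j. \<bar>r (s i)\<bar>)"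
    using g order_trans by (intro sum_mono) blast
  ultimately show ?thesis by argo
qed

lemma sum_strict_mono_le_initial_segment:
  fixes f :: "nat \<Rightarrow> real" and s :: "nat \<Rightarrow> nat"
  assumes "strict_mono s" and "\<And>k. 0 \<le> f k" and "\<And>i. i < j \<Longrightarrow> s i < m"
  shows "(\<Sum>i<j. f (s i)) \<le> (\<Sum>k<m. f k)"
proof -
  have "(\<Sum>i<j. f (s i)) = (\<Sum>k\<in>s ` {..<j}. f k)"
    by (simp add: sum.reindex strict_mono_imp_inj_on[OF assms(1)] inj_on_subset)
  also have "\<dots> \<le> (\<Sum>k<m. f k)"
    using assms(2,3) by (intro sum_mono2) auto
  finally show ?thesis .
qed

lemma near_maximal_index:
  fixes f :: "nat \<Rightarrow> real"
  assumes bounded: "\<forall>k. \<bar>f k\<bar> \<le> B" and "0 < T" and "K \<le> k0" and "2 * T \<le> \<bar>f k0\<bar>"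
  shows "\<exists>k\<ge>K. T \<le> \<bar>f k\<bar> \<and> (\<forall>k'\<ge>K. \<bar>f k'\<bar> \<le> 2 * \<bar>f k\<bar>)"
proof -
  define S where "S = (SUP k\<in>{K..}. \<bar>f k\<bar>)"
  have bdd: "bdd_above ((\<lambda>k. \<bar>f k\<bar>) ` {K..})" using bounded by (auto intro: bdd_aboveI2)
  have upper: "\<bar>f k\<bar> \<le> S" if "K \<le> k" for k
    unfolding S_def using that by (intro cSUP_upper[OF _ bdd]) auto
  have "S / 2 < S" using upper[OF assms(3)] assms(2,4) by linarith
  then obtain k where k: "K \<le> k" "S / 2 < \<bar>f k\<bar>"
    unfolding S_def using less_cSUP_iff[OF _ bdd, of "S / 2"] by (auto simp: S_def)
  then show ?thesis
    using upper upper[OF assms(3)] assms(4) by (intro exI[of _ k]) force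
qed

lemma large_entries_beyond:
  fixes M :: "nat \<Rightarrow> nat \<Rightarrow> real"
  assumes rows: "\<And>n. \<exists>B. \<forall>k. \<bar>M n k\<bar> \<le> B"
    and cols: "\<And>k. \<exists>B. \<forall>n. \<bar>M n k\<bar> \<le> B"
    and unbounded: "\<not> (\<exists>B. \<forall>n k. \<bar>M n k\<bar> \<le> B)"
  shows "\<exists>n\<ge>N. \<exists>k\<ge>K. T \<le> \<bar>M n k\<bar>"
proof -
  obtain rb cb where rb: "\<And>n k. \<bar>M n k\<bar> \<le> rb n" and cb: "\<And>n k. \<bar>M n k\<bar> \<le> cb k"
    using rows cols by metis
  define B where "B = max T (max (Max (rb ` {..<N})) (Max (cb ` {..<K})))"
  obtain n k where nk: "B < \<bar>M n k\<bar>" using unbounded by (meson not_le)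
  have "N \<le> n"
  proof (rule ccontr)
    assume "\<not> N \<le> n"
    then have "rb n \<le> B" unfolding B_def by (intro max.coboundedI2 max.coboundedI1 Max_ge) auto
    with nk rb[of n k] show False by simp
  qed
  moreover have "K \<le> k"
  proof (rule ccontr)
    assume "\<not> K \<le> k"
    then have "cb k \<le> B" unfolding B_def by (intro max.coboundedI2 Max_ge) auto
    with nk cb[of n k] show False by simp
  qed
  moreover have "T \<le> \<bar>M n k\<bar>" using nk unfolding B_def by simp
  ultimately show ?thesis by blast
qed

section \<open>Necessary conditions\<close>

lemma summable_abs_if_c0_multiplier:
  fixes r :: "nat \<Rightarrow> real"
  assumes mult: "\<And>x. x \<longlonglongrightarrow> 0 \<Longrightarrow> summable (\<lambda>k. r k * x k)"
  shows "summable (\<lambda>k. \<bar>r k\<bar>)"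
proof (rule ccontr)
  assume diverges: "\<not> summable (\<lambda>k. \<bar>r k\<bar>)"
  let ?P = "\<lambda>j K (n::nat) K'. real j + 1 \<le> (\<Sum>k\<in>{K..<K'}. \<bar>r k\<bar>)"
  have "\<exists>n\<ge>N. \<exists>K'>K. ?P j K n K'" for j K N
  proof -
    obtain K' where K': "real j + 1 + (\<Sum>k<K. \<bar>r k\<bar>) < (\<Sum>k<K'. \<bar>r k\<bar>)"
      using diverges summableI_nonneg_bounded[of "\<lambda>k. \<bar>r k\<bar>"] by (meson abs_ge_zero not_le)
    have "K < K'"
    proof (rule ccontr)
      assume "\<not> K < K'"
      then have "(\<Sum>k<K'. \<bar>r k\<bar>) \<le> (\<Sum>k<K. \<bar>r k\<bar>)" by (intro sum_mono2) auto
      with K' show False by simp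
    qed
    then show ?thesis
      using K' sum.atLeastLessThan_concat[of 0 K K' "\<lambda>k. \<bar>r k\<bar>"] by (auto simp: atLeast0LessThan)
  qed
  then obtain Ks where Ks: "strict_mono Ks" and P: "\<And>j. ?P j (Ks j) 0 (Ks (Suc j))"
    using gliding_hump_sequences[of ?P] by blast
  define x where "x k = sgn (r k) / (real (block_index Ks k) + 1)" for k
  have "x \<longlonglongrightarrow> 0"
    by (rule tendsto_zero_if_block_decay[OF Ks]) (auto simp: x_def abs_sgn_eq divide_le_cancel)
  then have "(\<lambda>j. \<Sum>k\<in>{Ks j..<Ks (Suc j)}. r k * x k) \<longlonglongrightarrow> 0"
    by (intro block_sums_tendsto_zero mult Ks)
  then obtain j where j: "\<bar>\<Sum>k\<in>{Ks j..<Ks (Suc j)}. r k * x k\<bar> < 1"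
    using LIMSEQ_D[of _ 0 1] by fastforce
  have "(\<Sum>k\<in>{Ks j..<Ks (Suc j)}. r k * x k) = (\<Sum>k\<in>{Ks j..<Ks (Suc j)}. \<bar>r k\<bar>) / (real j + 1)"
    unfolding sum_divide_distrib
    by (intro sum.cong refl) (auto simp: x_def block_index_eq[OF Ks] abs_sgn mult.commute)
  then show False using j P[of j] by simp
qed

text \<open>Gliding hump: rows of huge norm are tested against a null sequence that follows the sign
  pattern of row \<open>ns j\<close> on its hump \<open>[Ks j, Ks (Suc j))\<close>, damped by \<open>1 / (j + 1)\<close>.\<close>
lemma row_norms_bounded_if_c0_bounded:
  fixes M :: "nat \<Rightarrow> nat \<Rightarrow> real"
  assumes rows: "\<And>n. summable (\<lambda>k. \<bar>M n k\<bar>)"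
    and cols: "\<And>k. \<exists>B. \<forall>n. \<bar>M n k\<bar> \<le> B"
    and bounded: "\<And>x. x \<longlonglongrightarrow> 0 \<Longrightarrow> \<exists>B. \<forall>n. \<bar>\<Sum>k. M n k * x k\<bar> \<le> B"
  shows "\<exists>B. \<forall>n. (\<Sum>k. \<bar>M n k\<bar>) \<le> B"
proof (rule ccontr)
  assume unbounded: "\<not> ?thesis"
  obtain cb where cb: "\<And>k n. \<bar>M n k\<bar> \<le> cb k" using cols by metis
  define C where "C K = (\<Sum>k<K. cb k)" for K
  have head: "(\<Sum>k<K. \<bar>M n k\<bar>) \<le> C K" for K n
    unfolding C_def by (intro sum_mono cb)
  obtain ns Ks where "strict_mono ns" and Ks: "strict_mono Ks"
    and big: "\<And>j. (real j + C (Ks j) + 1) * (real j + 1) + C (Ks j) + 1 \<le> (\<Sum>k. \<bar>M (ns j) k\<bar>)"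
    and tail: "\<And>j. (\<Sum>i. \<bar>M (ns j) (i + Ks (Suc j))\<bar>) \<le> 1"
    by (rule humps_with_small_tails[where M=M, OF rows zero_less_one,
          where Q="\<lambda>j K n. (real j + C K + 1) * (real j + 1) + C K + 1 \<le> (\<Sum>k. \<bar>M n k\<bar>)"])
      (use frequently_ge_if_unbounded[OF unbounded] in simp_all)
  define x where "x k = sgn (M (ns (block_index Ks k)) k) / (real (block_index Ks k) + 1)" for k
  have x_decay: "\<forall>k. \<bar>x k\<bar> \<le> 1 / (real (block_index Ks k) + 1)"
    by (auto simp: x_def abs_sgn_eq divide_le_cancel)
  moreover have "1 / (real i + 1) \<le> 1" for i by simp
  ultimately have x1: "\<forall>k. \<bar>x k\<bar> \<le> 1" by (meson order_trans)
  obtain B where B: "\<And>n. \<bar>\<Sum>k. M n k * x k\<bar> \<le> B"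
    using bounded[OF tendsto_zero_if_block_decay[OF Ks x_decay]] by blast
  obtain j :: nat where j: "B < real j" using reals_Archimedean2 by blast
  let ?r = "M (ns j)" and ?hump = "\<Sum>k\<in>{Ks j..<Ks (Suc j)}. \<bar>M (ns j) k\<bar>"
  have le: "Ks j \<le> Ks (Suc j)" using strict_mono_less_eq[OF Ks] by simp
  have "\<bar>(\<Sum>k. ?r k * x k) - 1 / (real j + 1) * ?hump\<bar>
      \<le> (\<Sum>k<Ks j. \<bar>?r k\<bar>) + (\<Sum>i. \<bar>?r (i + Ks (Suc j))\<bar>)"
    by (rule block_sign_estimate[OF rows x1 le])
      (auto simp: x_def block_index_eq[OF Ks] divide_inverse mult.commute)
  moreover have "?hump = (\<Sum>k. \<bar>?r k\<bar>) - (\<Sum>k<Ks j. \<bar>?r k\<bar>) - (\<Sum>i. \<bar>?r (i + Ks (Suc j))\<bar>)"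
    using suminf_split_block[OF rows le] by simp
  then have "(real j + C (Ks j) + 1) * (real j + 1) \<le> ?hump"
    using big[of j] tail[of j] head[where K="Ks j" and n="ns j"] by linarith
  then have "real j + C (Ks j) + 1 \<le> 1 / (real j + 1) * ?hump"
    by (simp add: field_simps)
  ultimately have "real j \<le> \<bar>\<Sum>k. ?r k * x k\<bar>"
    using tail[of j] head[where K="Ks j" and n="ns j"] by linarith
  with B[of "ns j"] j show False by simp
qed

lemma frequently_small_head:
  fixes D :: "nat \<Rightarrow> nat \<Rightarrow> real"
  assumes cols: "\<And>k. (\<lambda>n. D n k) \<longlonglongrightarrow> 0" and "0 < e" and often: "\<And>N. \<exists>n\<ge>N. P n"
  shows "\<exists>n\<ge>N. (\<Sum>k<K. \<bar>D n k\<bar>) \<le> e \<and> P n"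
proof -
  have "(\<lambda>n. \<Sum>k<K. \<bar>D n k\<bar>) \<longlonglongrightarrow> (\<Sum>k<K. 0)"
    by (intro tendsto_sum tendsto_rabs_zero cols)
  then obtain N0 where N0: "\<And>n. n \<ge> N0 \<Longrightarrow> (\<Sum>k<K. \<bar>D n k\<bar>) \<le> e"
    using LIMSEQ_D[of _ 0 e] \<open>0 < e\<close> by (force simp: eventually_sequentially)
  obtain n where "n \<ge> max N N0" "P n" using often by blast
  with N0[of n] show ?thesis by (intro exI[of _ n]) auto
qed

text \<open>Gliding hump with alternating humps: the test sequence follows the sign pattern of row
  \<open>ns j\<close> on the odd humps and vanishes on the even ones, so \<open>(D x)\<close> along the rows \<open>ns j\<close>
  oscillates and cannot converge.\<close>
lemma row_norms_tendsto_zero_if_linf_convergent: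
  fixes D :: "nat \<Rightarrow> nat \<Rightarrow> real"
  assumes rows: "\<And>n. summable (\<lambda>k. \<bar>D n k\<bar>)"
    and cols: "\<And>k. (\<lambda>n. D n k) \<longlonglongrightarrow> 0"
    and conv: "\<And>x. \<forall>k. \<bar>x k\<bar> \<le> 1 \<Longrightarrow> convergent (\<lambda>n. \<Sum>k. D n k * x k)"
  shows "(\<lambda>n. \<Sum>k. \<bar>D n k\<bar>) \<longlonglongrightarrow> 0"
proof (rule ccontr)
  assume "\<not> ?thesis"
  then obtain d where d: "0 < d" and often: "\<And>N. \<exists>n\<ge>N. d \<le> (\<Sum>k. \<bar>D n k\<bar>)"
    using frequently_ge_if_not_tendsto_zero[of "\<lambda>n. \<Sum>k. \<bar>D n k\<bar>"] rows
    by (metis abs_ge_zero suminf_nonneg)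
  have often_small_head: "\<exists>n\<ge>N. (\<Sum>k<K. \<bar>D n k\<bar>) \<le> d / 8 \<and> d \<le> (\<Sum>k. \<bar>D n k\<bar>)" for N K
    using d by (intro frequently_small_head[OF cols _ often]) simp
  obtain ns Ks where ns: "strict_mono ns" and Ks: "strict_mono Ks"
    and head: "\<And>j. (\<Sum>k<Ks j. \<bar>D (ns j) k\<bar>) \<le> d / 8 \<and> d \<le> (\<Sum>k. \<bar>D (ns j) k\<bar>)"
    and tail: "\<And>j. (\<Sum>i. \<bar>D (ns j) (i + Ks (Suc j))\<bar>) \<le> d / 8"
    by (rule humps_with_small_tails[where M=D, OF rows,
          where e="d / 8" and Q="\<lambda>j K n. (\<Sum>k<K. \<bar>D n k\<bar>) \<le> d / 8 \<and> d \<le> (\<Sum>k. \<bar>D n k\<bar>)"])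
      (use d often_small_head in simp_all)
  define w where "w j = (if odd j then 1 else 0 :: real)" for j :: nat
  define x where "x k = w (block_index Ks k) * sgn (D (ns (block_index Ks k)) k)" for k
  have x1: "\<forall>k. \<bar>x k\<bar> \<le> 1" by (auto simp: x_def w_def abs_sgn_eq)
  define y where "y = (\<lambda>j. \<Sum>k. D (ns j) k * x k)"
  have est: "\<bar>y j - w j * (\<Sum>k\<in>{Ks j..<Ks (Suc j)}. \<bar>D (ns j) k\<bar>)\<bar> \<le> d / 4"
    and hump: "3 * d / 4 \<le> (\<Sum>k\<in>{Ks j..<Ks (Suc j)}. \<bar>D (ns j) k\<bar>)" for j
  proof -
    have le: "Ks j \<le> Ks (Suc j)" using strict_mono_less_eq[OF Ks] by simp
    show "\<bar>y j - w j * (\<Sum>k\<in>{Ks j..<Ks (Suc j)}. \<bar>D (ns j) k\<bar>)\<bar> \<le> d / 4"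
      using block_sign_estimate[OF rows x1 le, of "w j"] head[of j] tail[of j] unfolding y_def
      by (force simp: x_def block_index_eq[OF Ks])
    show "3 * d / 4 \<le> (\<Sum>k\<in>{Ks j..<Ks (Suc j)}. \<bar>D (ns j) k\<bar>)"
      using suminf_split_block[OF rows le, of "ns j"] head[of j] tail[of j] by linarith
  qed
  have "convergent y"
    using convergent_subseq_convergent[OF conv[OF x1] ns] by (simp add: y_def o_def)
  then obtain N where N: "\<And>m n. m \<ge> N \<Longrightarrow> n \<ge> N \<Longrightarrow> norm (y m - y n) < d / 4"
    using CauchyD[OF convergent_Cauchy, of y "d / 4"] d by auto
  have "d / 2 \<le> y (Suc (2 * N))"
    using est[of "Suc (2 * N)", unfolded abs_le_iff] hump[of "Suc (2 * N)"] by (simp add: w_def)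
  moreover have "\<bar>y (2 * N)\<bar> \<le> d / 4"
    using est[of "2 * N"] by (simp add: w_def)
  ultimately show False using N[of "Suc (2 * N)" "2 * N"] by simp
qed

lemma bounded_if_l1_multiplier:
  fixes r :: "nat \<Rightarrow> real"
  assumes mult: "\<And>x. summable (\<lambda>k. \<bar>x k\<bar>) \<Longrightarrow> summable (\<lambda>k. r k * x k)"
  shows "\<exists>B. \<forall>k. \<bar>r k\<bar> \<le> B"
proof (rule ccontr)
  assume "\<not> ?thesis"
  then have "\<exists>n\<ge>N. 2 ^ j \<le> \<bar>r n\<bar>" for j N
    using frequently_ge_if_unbounded[of "\<lambda>k. \<bar>r k\<bar>"] by blast
  then obtain s where s: "strict_mono s" and big: "\<And>j. 2 ^ j \<le> \<bar>r (s j)\<bar>"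
    using strict_mono_choice[of "\<lambda>j n. 2 ^ j \<le> \<bar>r n\<bar>"] by blast
  define x where "x = sparse_seq s (\<lambda>j. sgn (r (s j)) * (1/2) ^ j)"
  have "summable (\<lambda>k. \<bar>x k\<bar>)"
    unfolding x_def
    by (rule summable_abs_sparse_seq[OF s], rule summable_comparison_test'[OF summable_geometric[of "1/2"]])
      (auto simp: abs_mult abs_sgn_eq)
  then have "(\<lambda>j. r (s j) * x (s j)) \<longlonglongrightarrow> 0"
    using LIMSEQ_subseq_LIMSEQ[OF summable_LIMSEQ_zero[OF mult] s] by (simp add: o_def)
  then obtain j where j: "\<bar>r (s j) * x (s j)\<bar> < 1"
    using LIMSEQ_D[of _ 0 1] by fastforce
  have "r (s j) \<noteq> 0" using big[of j] by (metis abs_zero not_le zero_less_power zero_less_numeral)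
  have "(1::real) = 2 ^ j * (1/2) ^ j" by (simp add: power_one_over)
  also have "\<dots> \<le> \<bar>r (s j) * x (s j)\<bar>"
    using big[of j] \<open>r (s j) \<noteq> 0\<close>
    by (simp add: x_def sparse_seq_at[OF s] abs_mult abs_sgn_eq mult_right_mono)
  finally show False using j by simp
qed

lemma near_maximal_humps:
  fixes M :: "nat \<Rightarrow> nat \<Rightarrow> real" and T :: "nat \<Rightarrow> nat \<Rightarrow> real"
  assumes rows: "\<And>n. \<exists>B. \<forall>k. \<bar>M n k\<bar> \<le> B"
    and cols: "\<And>k. \<exists>B. \<forall>n. \<bar>M n k\<bar> \<le> B"
    and unbounded: "\<not> (\<exists>B. \<forall>n k. \<bar>M n k\<bar> \<le> B)"
    and T: "\<And>j K. 0 < T j K"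
  obtains Ks s ns where "strict_mono Ks" and "\<And>j. Ks j \<le> s j" and "\<And>j. s j < Ks (Suc j)"
    and "\<And>j. T j (Ks j) \<le> \<bar>M (ns j) (s j)\<bar>"
    and "\<And>j k. Ks j \<le> k \<Longrightarrow> \<bar>M (ns j) k\<bar> \<le> 2 * \<bar>M (ns j) (s j)\<bar>"
proof -
  let ?P = "\<lambda>j K n K'. K < K' \<and> T j K \<le> \<bar>M n (K' - 1)\<bar>
              \<and> (\<forall>k\<ge>K. \<bar>M n k\<bar> \<le> 2 * \<bar>M n (K' - 1)\<bar>)"
  have "\<exists>n\<ge>N. \<exists>K'>K. ?P j K n K'" for j K N
  proof -
    obtain n k0 where n: "N \<le> n" "K \<le> k0" "2 * T j K \<le> \<bar>M n k0\<bar>"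
      using large_entries_beyond[OF rows cols unbounded] by blast
    obtain B where row_n: "\<forall>k. \<bar>M n k\<bar> \<le> B" using rows by blast
    obtain k where "K \<le> k" "T j K \<le> \<bar>M n k\<bar>" "\<forall>k'\<ge>K. \<bar>M n k'\<bar> \<le> 2 * \<bar>M n k\<bar>"
      using near_maximal_index[OF row_n T n(2,3)] by blast
    with n(1) show ?thesis by (intro exI[of _ n] conjI exI[of _ "Suc k"]) auto
  qed
  then obtain ns Ks where Ks: "strict_mono Ks" and P: "\<And>j. ?P j (Ks j) (ns j) (Ks (Suc j))"
    using gliding_hump_sequences[of ?P] by blast
  show ?thesis
  proof (rule that[of Ks "\<lambda>j. Ks (Suc j) - 1" ns])
    show "Ks j \<le> Ks (Suc j) - 1" "Ks (Suc j) - 1 < Ks (Suc j)"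
      "T j (Ks j) \<le> \<bar>M (ns j) (Ks (Suc j) - 1)\<bar>" for j
      using P[of j] by auto
    show "\<bar>M (ns j) k\<bar> \<le> 2 * \<bar>M (ns j) (Ks (Suc j) - 1)\<bar>" if "Ks j \<le> k" for j k
      using P[of j] that by auto
  qed (rule Ks)
qed

text \<open>Gliding hump with single-point humps: in row \<open>ns j\<close> the entry at \<open>s j\<close> is at least half
  of every later entry, so geometric weights \<open>4\<^sup>-\<^sup>i\<close> let it dominate the rest of the row.\<close>
lemma entries_bounded_if_l1_bounded:
  fixes M :: "nat \<Rightarrow> nat \<Rightarrow> real"
  assumes rows: "\<And>n. \<exists>B. \<forall>k. \<bar>M n k\<bar> \<le> B"
    and cols: "\<And>k. \<exists>B. \<forall>n. \<bar>M n k\<bar> \<le> B"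
    and bounded: "\<And>x. summable (\<lambda>k. \<bar>x k\<bar>) \<Longrightarrow>
              (\<forall>n. summable (\<lambda>k. M n k * x k)) \<and> (\<exists>B. \<forall>n. \<bar>\<Sum>k. M n k * x k\<bar> \<le> B)"
  shows "\<exists>B. \<forall>n k. \<bar>M n k\<bar> \<le> B"
proof (rule ccontr)
  assume unbounded: "\<not> ?thesis"
  obtain cb where cb: "\<And>k n. \<bar>M n k\<bar> \<le> cb k" using cols by metis
  define C where "C K = (\<Sum>k<K. cb k)" for K
  have "0 \<le> cb k" for k using cb[where k=k and n=0] by linarith
  then have "0 \<le> C K" for K unfolding C_def by (simp add: sum_nonneg)
  then have T: "0 < 3 * 4 ^ j * (real j + C K + 1)" for j K
    by (intro mult_pos_pos) (auto simp: add_nonneg_pos)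
  obtain Ks s ns where Ks: "strict_mono Ks"
    and s_block: "\<And>j. Ks j \<le> s j" "\<And>j. s j < Ks (Suc j)"
    and peak: "\<And>j. 3 * 4 ^ j * (real j + C (Ks j) + 1) \<le> \<bar>M (ns j) (s j)\<bar>"
    and later: "\<And>j k. Ks j \<le> k \<Longrightarrow> \<bar>M (ns j) k\<bar> \<le> 2 * \<bar>M (ns j) (s j)\<bar>"
    using near_maximal_humps[where T="\<lambda>j K. 3 * 4 ^ j * (real j + C K + 1)", OF rows cols unbounded T]
    by blast
  have s: "strict_mono s"
    by (rule strict_monoI_Suc) (use s_block(2) s_block(1)[of "Suc _"] in \<open>rule less_le_trans\<close>)
  have Ks_le: "i \<le> j \<Longrightarrow> Ks i \<le> Ks j" for i j using strict_mono_less_eq[OF Ks] by simp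
  define x where "x = sparse_seq s (\<lambda>i. sgn (M (ns i) (s i)) * (1/4) ^ i)"
  have x_l1: "summable (\<lambda>k. \<bar>x k\<bar>)"
    unfolding x_def
    by (rule summable_abs_sparse_seq[OF s], rule summable_comparison_test'[OF summable_geometric[of "1/4"]])
      (auto simp: abs_mult abs_sgn_eq)
  obtain B where sm: "\<And>n. summable (\<lambda>k. M n k * x k)" and B: "\<And>n. \<bar>\<Sum>k. M n k * x k\<bar> \<le> B"
    using bounded[OF x_l1] by blast
  obtain j :: nat where j: "B < real j" using reals_Archimedean2 by blast
  let ?r = "M (ns j)" and ?m = "\<bar>M (ns j) (s j)\<bar>"
  have "?m * (1/4) ^ j \<le> 3 * ((\<Sum>k. ?r k * x k) + (\<Sum>i<j. \<bar>?r (s i)\<bar>))"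
    unfolding x_def
  proof (rule sparse_hump_estimate[OF s sm[unfolded x_def]])
    show "\<bar>?r (s i)\<bar> \<le> 2 * ?m" if "j < i" for i
      using later s_block(1)[of i] Ks_le[of j i] that by simp
    show "\<bar>sgn (M (ns i) (s i)) * (1/4) ^ i\<bar> \<le> (1/4) ^ i" for i
      by (simp add: abs_mult abs_sgn_eq)
    show "?r (s j) * (sgn (?r (s j)) * (1/4) ^ j) = ?m * (1/4) ^ j"
      by (simp add: abs_sgn)
  qed
  moreover have "(\<Sum>i<j. \<bar>?r (s i)\<bar>) \<le> C (Ks j)"
  proof -
    have "s i < Ks j" if "i < j" for i
      using s_block(2)[of i] Ks_le[of "Suc i" j] that by simp
    then have "(\<Sum>i<j. \<bar>?r (s i)\<bar>) \<le> (\<Sum>k<Ks j. \<bar>?r k\<bar>)"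
      by (intro sum_strict_mono_le_initial_segment[OF s]) auto
    also have "\<dots> \<le> C (Ks j)" unfolding C_def by (intro sum_mono cb)
    finally show ?thesis .
  qed
  moreover have "3 * (real j + C (Ks j) + 1) \<le> ?m * (1/4) ^ j"
    using mult_right_mono[OF peak[of j], of "(1/4) ^ j"] by (simp add: power_one_over)
  ultimately have "real j < (\<Sum>k. ?r k * x k)" by argo
  with B[of "ns j"] j show False by linarith
qed

lemma matrix_class_c0_rows_summable:
  "matrix_class c0_space Y M \<Longrightarrow> summable (\<lambda>k. \<bar>M n k\<bar>)"
  by (rule summable_abs_if_c0_multiplier) (auto simp: matrix_class_def c0_space_iff)

lemma matrix_class_c0_row_norms_bounded:
  assumes "matrix_class c0_space Y M" and "Y \<subseteq> linf_space"
  shows "\<exists>B. \<forall>n. summable (\<lambda>k. \<bar>M n k\<bar>) \<and> (\<Sum>k. \<bar>M n k\<bar>) \<le> B"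
proof -
  have "\<exists>B. \<forall>n. (\<Sum>k. \<bar>M n k\<bar>) \<le> B"
  proof (rule row_norms_bounded_if_c0_bounded)
    show "summable (\<lambda>k. \<bar>M n k\<bar>)" for n by (rule matrix_class_c0_rows_summable[OF assms(1)])
    show "\<exists>B. \<forall>n. \<bar>M n k\<bar> \<le> B" for k
      by (rule matrix_class_column_bounded[OF assms(1) unit_seq_in_c0 assms(2)])
    show "\<exists>B. \<forall>n. \<bar>\<Sum>k. M n k * x k\<bar> \<le> B" if "x \<longlonglongrightarrow> 0" for x
    proof -
      have "(\<lambda>n. \<Sum>k. M n k * x k) \<in> Y"
        using that assms(1) by (auto simp: matrix_class_def c0_space_iff)
      then show ?thesis using subsetD[OF assms(2)] by (simp add: linf_space_iff)
    qed
  qed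
  then show ?thesis using matrix_class_c0_rows_summable[OF assms(1)] by blast
qed

lemma matrix_class_l1_entries_bounded:
  assumes "matrix_class l1_space Y M" and "Y \<subseteq> linf_space"
  shows "\<exists>B. \<forall>n k. \<bar>M n k\<bar> \<le> B"
proof (rule entries_bounded_if_l1_bounded)
  show "\<exists>B. \<forall>k. \<bar>M n k\<bar> \<le> B" for n
    by (rule bounded_if_l1_multiplier) (use assms(1) in \<open>auto simp: matrix_class_def l1_space_iff\<close>)
  show "\<exists>B. \<forall>n. \<bar>M n k\<bar> \<le> B" for k
    by (rule matrix_class_column_bounded[OF assms(1) unit_seq_in_l1 assms(2)])
  show "(\<forall>n. summable (\<lambda>k. M n k * x k)) \<and> (\<exists>B. \<forall>n. \<bar>\<Sum>k. M n k * x k\<bar> \<le> B)"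
    if "summable (\<lambda>k. \<bar>x k\<bar>)" for x
  proof -
    have "(\<forall>n. summable (\<lambda>k. M n k * x k)) \<and> (\<lambda>n. \<Sum>k. M n k * x k) \<in> Y"
      using that assms(1) by (auto simp: matrix_class_def l1_space_iff)
    then show ?thesis using subsetD[OF assms(2)] by (simp add: linf_space_iff)
  qed
qed

section \<open>Sufficient conditions\<close>

lemma summable_abs_column_limits:
  fixes M :: "nat \<Rightarrow> nat \<Rightarrow> real"
  assumes rows: "\<And>n. summable (\<lambda>k. \<bar>M n k\<bar>)"
    and bound: "\<And>n. (\<Sum>k. \<bar>M n k\<bar>) \<le> B"
    and cols: "\<And>k. (\<lambda>n. M n k) \<longlonglongrightarrow> a k"
  shows "summable (\<lambda>k. \<bar>a k\<bar>)"
proof (rule summableI_nonneg_bounded)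
  show "(\<Sum>k<K. \<bar>a k\<bar>) \<le> B" for K
  proof (rule LIMSEQ_le_const2)
    show "(\<lambda>n. \<Sum>k<K. \<bar>M n k\<bar>) \<longlonglongrightarrow> (\<Sum>k<K. \<bar>a k\<bar>)"
      by (intro tendsto_sum tendsto_rabs cols)
    show "\<exists>N. \<forall>n\<ge>N. (\<Sum>k<K. \<bar>M n k\<bar>) \<le> B"
      using sum_le_suminf[OF rows, of "{..<K}"] bound by (meson abs_ge_zero finite_lessThan order_trans)
  qed
qed simp

lemma l1_transform_tendsto:
  fixes M :: "nat \<Rightarrow> nat \<Rightarrow> real"
  assumes bound: "\<And>n k. \<bar>M n k\<bar> \<le> B" and cols: "\<And>k. (\<lambda>n. M n k) \<longlonglongrightarrow> a k"
    and x: "summable (\<lambda>k. \<bar>x k\<bar>)"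
  shows "(\<forall>n. summable (\<lambda>k. M n k * x k)) \<and> (\<lambda>n. \<Sum>k. M n k * x k) \<longlonglongrightarrow> (\<Sum>k. a k * x k)"
proof -
  have dom: "norm (M n k * x k) \<le> B * \<bar>x k\<bar>" for n k
    using mult_right_mono[OF bound abs_ge_zero[of "x k"]] by (simp add: abs_mult)
  have sB: "summable (\<lambda>k. B * \<bar>x k\<bar>)" using x by (rule summable_mult)
  have "eventually (\<lambda>n. summable (\<lambda>k. norm (M n k * x k))) sequentially \<and>
        summable (\<lambda>k. norm (a k * x k)) \<and> (\<lambda>n. \<Sum>k. M n k * x k) \<longlonglongrightarrow> (\<Sum>k. a k * x k)"
  proof (rule tannerys_theorem[where M="\<lambda>k. B * \<bar>x k\<bar>"])
    show "(\<lambda>n. M n k * x k) \<longlonglongrightarrow> a k * x k" for k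
      by (intro tendsto_mult cols tendsto_const)
    show "\<forall>\<^sub>F (k, n) in at_top \<times>\<^sub>F sequentially. norm (M n k * x k) \<le> B * \<bar>x k\<bar>"
      using dom by (intro always_eventually) auto
  qed (use sB in auto)
  moreover have "summable (\<lambda>k. M n k * x k)" for n
    by (rule summable_comparison_test'[OF sB dom])
  ultimately show ?thesis by blast
qed

lemma c0_transform_tendsto_zero:
  fixes D :: "nat \<Rightarrow> nat \<Rightarrow> real"
  assumes rows: "\<And>n. summable (\<lambda>k. \<bar>D n k\<bar>)"
    and bound: "\<And>n. (\<Sum>k. \<bar>D n k\<bar>) \<le> B"
    and cols: "\<And>k. (\<lambda>n. D n k) \<longlonglongrightarrow> 0"
    and x: "x \<longlonglongrightarrow> 0"
  shows "(\<lambda>n. \<Sum>k. D n k * x k) \<longlonglongrightarrow> 0"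
proof (rule LIMSEQ_I)
  fix e :: real assume "0 < e"
  have "0 \<le> B" using bound[of 0] suminf_nonneg[OF rows[of 0]] by simp
  define h where "h = e / (2 * (B + 1))"
  have h: "0 < h" "h * B < e / 2"
    using \<open>0 < e\<close> \<open>0 \<le> B\<close> by (simp_all add: h_def field_simps)
  obtain K where K: "\<And>k. K \<le> k \<Longrightarrow> \<bar>x k\<bar> \<le> h"
    using LIMSEQ_D[OF x h(1)] by (force intro: less_imp_le)
  have "(\<lambda>n. \<Sum>k<K. D n k * x k) \<longlonglongrightarrow> (\<Sum>k<K. 0 * x k)"
    by (intro tendsto_sum tendsto_mult cols tendsto_const)
  then obtain N where N: "\<And>n. N \<le> n \<Longrightarrow> \<bar>\<Sum>k<K. D n k * x k\<bar> < e / 2"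
    using LIMSEQ_D[of _ 0 "e / 2"] \<open>0 < e\<close> by force
  show "\<exists>N. \<forall>n\<ge>N. norm ((\<Sum>k. D n k * x k) - 0) < e"
  proof (intro exI allI impI)
    fix n assume "N \<le> n"
    obtain X where "\<forall>k. \<bar>x k\<bar> \<le> X" using bounded_if_tendsto[OF x] by blast
    then have split: "(\<Sum>k. D n k * x k) = (\<Sum>i. D n (i + K) * x (i + K)) + (\<Sum>k<K. D n k * x k)"
      by (intro suminf_split_initial_segment summable_mult_bounded[OF rows])
    have "\<bar>\<Sum>i. D n (i + K) * x (i + K)\<bar> \<le> h * (\<Sum>i. \<bar>D n (i + K)\<bar>)"
      by (rule abs_suminf_tail_mult_le[OF rows K])
    also have "\<dots> \<le> h * B"
    proof (rule mult_left_mono)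
      have "0 \<le> (\<Sum>k<K. \<bar>D n k\<bar>)" by (simp add: sum_nonneg)
      then show "(\<Sum>i. \<bar>D n (i + K)\<bar>) \<le> B"
        using suminf_split_initial_segment[OF rows[of n], of K] bound[of n] by linarith
    qed (use h(1) in simp)
    finally show "norm ((\<Sum>k. D n k * x k) - 0) < e"
      using split N[OF \<open>N \<le> n\<close>] h(2) by simp
  qed
qed

lemma c0_transform_tendsto:
  fixes M :: "nat \<Rightarrow> nat \<Rightarrow> real"
  assumes rows: "\<And>n. summable (\<lambda>k. \<bar>M n k\<bar>)"
    and bound: "\<And>n. (\<Sum>k. \<bar>M n k\<bar>) \<le> B"
    and cols: "\<And>k. (\<lambda>n. M n k) \<longlonglongrightarrow> a k"
    and x: "x \<longlonglongrightarrow> 0"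
  shows "(\<forall>n. summable (\<lambda>k. M n k * x k)) \<and> (\<lambda>n. \<Sum>k. M n k * x k) \<longlonglongrightarrow> (\<Sum>k. a k * x k)"
proof
  obtain X where X: "\<forall>k. \<bar>x k\<bar> \<le> X" using bounded_if_tendsto[OF x] by blast
  show "\<forall>n. summable (\<lambda>k. M n k * x k)" using summable_mult_bounded[OF rows X] by blast
  have a: "summable (\<lambda>k. \<bar>a k\<bar>)" by (rule summable_abs_column_limits[OF rows bound cols])
  have "(\<lambda>n. \<Sum>k. (M n k - a k) * x k) \<longlonglongrightarrow> 0"
  proof (rule c0_transform_tendsto_zero[OF _ _ _ x])
    show "summable (\<lambda>k. \<bar>M n k - a k\<bar>)" for n by (rule summable_abs_diff[OF rows a])
    show "(\<Sum>k. \<bar>M n k - a k\<bar>) \<le> B + (\<Sum>k. \<bar>a k\<bar>)" for n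
      using suminf_abs_diff_le[OF rows a, of n] bound[of n] by linarith
    show "(\<lambda>n. M n k - a k) \<longlonglongrightarrow> 0" for k
      using tendsto_diff[OF cols tendsto_const, of k "a k"] by simp
  qed
  then have "(\<lambda>n. (\<Sum>k. M n k * x k) - (\<Sum>k. a k * x k)) \<longlonglongrightarrow> 0"
    by (simp add: suminf_mult_diff[OF rows a X])
  then show "(\<lambda>n. \<Sum>k. M n k * x k) \<longlonglongrightarrow> (\<Sum>k. a k * x k)"
    by (simp add: LIM_zero_iff)
qed

lemma c_transform_tendsto:
  fixes M :: "nat \<Rightarrow> nat \<Rightarrow> real"
  assumes rows: "\<And>n. summable (\<lambda>k. \<bar>M n k\<bar>)"
    and bound: "\<And>n. (\<Sum>k. \<bar>M n k\<bar>) \<le> B"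
    and cols: "\<And>k. (\<lambda>n. M n k) \<longlonglongrightarrow> a k"
    and row_sums: "(\<lambda>n. \<Sum>k. M n k) \<longlonglongrightarrow> \<sigma>"
    and x: "x \<longlonglongrightarrow> l"
  shows "(\<forall>n. summable (\<lambda>k. M n k * x k))
    \<and> (\<lambda>n. \<Sum>k. M n k * x k) \<longlonglongrightarrow> l * \<sigma> + (\<Sum>k. a k * (x k - l))"
proof
  obtain X where X: "\<forall>k. \<bar>x k\<bar> \<le> X" using bounded_if_tendsto[OF x] by blast
  show "\<forall>n. summable (\<lambda>k. M n k * x k)" using summable_mult_bounded[OF rows X] by blast
  have "(\<lambda>k. x k - l) \<longlonglongrightarrow> 0" using tendsto_diff[OF x tendsto_const[of l]] by simp
  note null_part = c0_transform_tendsto[OF rows bound cols this]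
  have "(\<Sum>k. M n k * x k) = l * (\<Sum>k. M n k) + (\<Sum>k. M n k * (x k - l))" for n
  proof -
    have "summable (\<lambda>k. M n k)" using rows[of n] by (rule summable_rabs_cancel)
    moreover have "summable (\<lambda>k. M n k * (x k - l))" using null_part by blast
    ultimately have "(\<Sum>k. l * M n k + M n k * (x k - l)) = l * (\<Sum>k. M n k) + (\<Sum>k. M n k * (x k - l))"
      by (simp add: suminf_add[symmetric] suminf_mult summable_mult)
    then show ?thesis by (simp add: algebra_simps)
  qed
  then show "(\<lambda>n. \<Sum>k. M n k * x k) \<longlonglongrightarrow> l * \<sigma> + (\<Sum>k. a k * (x k - l))"
    using null_part by (auto intro!: tendsto_add tendsto_mult tendsto_const row_sums)
qed

text \<open>Scheffe's lemma for \<open>\<ell>\<^sub>1\<close>.\<close>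
lemma l1_norm_diff_tendsto_zero:
  fixes M :: "nat \<Rightarrow> nat \<Rightarrow> real"
  assumes rows: "\<And>n. summable (\<lambda>k. \<bar>M n k\<bar>)"
    and cols: "\<And>k. (\<lambda>n. M n k) \<longlonglongrightarrow> a k"
    and a: "summable (\<lambda>k. \<bar>a k\<bar>)"
    and norms: "(\<lambda>n. \<Sum>k. \<bar>M n k\<bar>) \<longlonglongrightarrow> (\<Sum>k. \<bar>a k\<bar>)"
  shows "(\<lambda>n. \<Sum>k. \<bar>M n k - a k\<bar>) \<longlonglongrightarrow> 0"
proof (rule LIMSEQ_I)
  fix e :: real assume "0 < e"
  obtain K where "\<forall>m\<ge>K. norm (\<Sum>i. \<bar>a (i + m)\<bar>) < e / 4"
    using suminf_exist_split[of "e / 4" "\<lambda>k. \<bar>a k\<bar>"] \<open>0 < e\<close> a by auto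
  then have tail: "(\<Sum>i. \<bar>a (i + K)\<bar>) < e / 4" by auto
  define u where "u n = (\<Sum>k<K. \<bar>M n k - a k\<bar>) + ((\<Sum>k. \<bar>M n k\<bar>) - (\<Sum>k<K. \<bar>M n k\<bar>))
    + (\<Sum>i. \<bar>a (i + K)\<bar>)" for n
  have "u \<longlonglongrightarrow> (\<Sum>k<K. \<bar>a k - a k\<bar>) + ((\<Sum>k. \<bar>a k\<bar>) - (\<Sum>k<K. \<bar>a k\<bar>)) + (\<Sum>i. \<bar>a (i + K)\<bar>)"
    unfolding u_def by (intro tendsto_intros norms cols)
  moreover have "(\<Sum>k. \<bar>a k\<bar>) - (\<Sum>k<K. \<bar>a k\<bar>) = (\<Sum>i. \<bar>a (i + K)\<bar>)"
    using suminf_split_initial_segment[OF a, of K] by simp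
  ultimately have "u \<longlonglongrightarrow> 2 * (\<Sum>i. \<bar>a (i + K)\<bar>)" by simp
  moreover have "0 \<le> (\<Sum>i. \<bar>a (i + K)\<bar>)"
    using a by (intro suminf_nonneg) (simp_all add: summable_iff_shift[where f="\<lambda>k. \<bar>a k\<bar>"])
  then have "2 * (\<Sum>i. \<bar>a (i + K)\<bar>) < e" using tail by simp
  ultimately obtain N where N: "\<And>n. N \<le> n \<Longrightarrow> u n < e"
    by (metis eventually_sequentially order_tendstoD(2))
  have "norm ((\<Sum>k. \<bar>M n k - a k\<bar>) - 0) < e" if "N \<le> n" for n
    using suminf_abs_diff_le_split[OF rows a, of n K] N[OF that]
      suminf_nonneg[OF summable_abs_diff[OF rows a, of n]] unfolding u_def by simp
  then show "\<exists>N. \<forall>n\<ge>N. norm ((\<Sum>k. \<bar>M n k - a k\<bar>) - 0) < e" by blast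
qed

lemma linf_transform_tendsto:
  fixes M :: "nat \<Rightarrow> nat \<Rightarrow> real"
  assumes rows: "\<And>n. summable (\<lambda>k. \<bar>M n k\<bar>)"
    and a: "summable (\<lambda>k. \<bar>a k\<bar>)"
    and l1_conv: "(\<lambda>n. \<Sum>k. \<bar>M n k - a k\<bar>) \<longlonglongrightarrow> 0"
    and X: "\<forall>k. \<bar>x k\<bar> \<le> X"
  shows "(\<forall>n. summable (\<lambda>k. M n k * x k)) \<and> (\<lambda>n. \<Sum>k. M n k * x k) \<longlonglongrightarrow> (\<Sum>k. a k * x k)"
proof
  show "\<forall>n. summable (\<lambda>k. M n k * x k)" using summable_mult_bounded[OF rows X] by blast
  have "(\<lambda>n. \<Sum>k. (M n k - a k) * x k) \<longlonglongrightarrow> 0"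
  proof (rule Lim_null_comparison)
    show "\<forall>\<^sub>F n in sequentially. norm (\<Sum>k. (M n k - a k) * x k) \<le> X * (\<Sum>k. \<bar>M n k - a k\<bar>)"
      using abs_suminf_mult_bounded_le[OF summable_abs_diff[OF rows a] X] by simp
    show "(\<lambda>n. X * (\<Sum>k. \<bar>M n k - a k\<bar>)) \<longlonglongrightarrow> 0"
      using tendsto_mult_right_zero[OF l1_conv] by simp
  qed
  then show "(\<lambda>n. \<Sum>k. M n k * x k) \<longlonglongrightarrow> (\<Sum>k. a k * x k)"
    by (simp add: suminf_mult_diff[OF rows a X] LIM_zero_iff)
qed

lemma schur_l1_convergence:
  fixes M :: "nat \<Rightarrow> nat \<Rightarrow> real"
  assumes rows: "\<And>n. summable (\<lambda>k. \<bar>M n k\<bar>)"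
    and bound: "\<And>n. (\<Sum>k. \<bar>M n k\<bar>) \<le> B"
    and cols: "\<And>k. (\<lambda>n. M n k) \<longlonglongrightarrow> a k"
    and conv: "\<And>x. \<forall>k. \<bar>x k\<bar> \<le> 1 \<Longrightarrow> convergent (\<lambda>n. \<Sum>k. M n k * x k)"
  shows "summable (\<lambda>k. \<bar>a k\<bar>)" and "(\<lambda>n. \<Sum>k. \<bar>M n k - a k\<bar>) \<longlonglongrightarrow> 0"
proof -
  show a: "summable (\<lambda>k. \<bar>a k\<bar>)" by (rule summable_abs_column_limits[OF rows bound cols])
  show "(\<lambda>n. \<Sum>k. \<bar>M n k - a k\<bar>) \<longlonglongrightarrow> 0"
  proof (rule row_norms_tendsto_zero_if_linf_convergent)
    show "summable (\<lambda>k. \<bar>M n k - a k\<bar>)" for n by (rule summable_abs_diff[OF rows a])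
    show "(\<lambda>n. M n k - a k) \<longlonglongrightarrow> 0" for k
      using tendsto_diff[OF cols tendsto_const, of k "a k"] by simp
    show "convergent (\<lambda>n. \<Sum>k. (M n k - a k) * x k)" if x: "\<forall>k. \<bar>x k\<bar> \<le> 1" for x
      unfolding suminf_mult_diff[OF rows a x] by (intro convergent_diff conv[OF x] convergent_const)
  qed
qed

section \<open>The classes \<open>(X : c\<^sub>0)\<close> and \<open>(X : c)\<close>\<close>

lemma matrix_class_linf_c0_iff:
  "matrix_class linf_space c0_space M \<longleftrightarrow>
     (\<forall>n. summable (\<lambda>k. \<bar>M n k\<bar>)) \<and> (\<lambda>n. \<Sum>k. \<bar>M n k\<bar>) \<longlonglongrightarrow> 0"
proof
  assume M: "matrix_class linf_space c0_space M"
  then have M0: "matrix_class c0_space c0_space M"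
    by (rule matrix_class_mono[OF c0_subset_linf order_refl])
  obtain B where rows: "\<And>n. summable (\<lambda>k. \<bar>M n k\<bar>)" and B: "\<And>n. (\<Sum>k. \<bar>M n k\<bar>) \<le> B"
    using matrix_class_c0_row_norms_bounded[OF M0 c0_subset_linf] by blast
  have "(\<lambda>n. \<Sum>k. \<bar>M n k - 0\<bar>) \<longlonglongrightarrow> 0"
  proof (rule schur_l1_convergence(2)[OF rows B])
    show "(\<lambda>n. M n k) \<longlonglongrightarrow> 0" for k
      using matrix_class_column[OF M subsetD[OF c0_subset_linf unit_seq_in_c0]] by (simp add: c0_space_iff)
    show "convergent (\<lambda>n. \<Sum>k. M n k * x k)" if "\<forall>k. \<bar>x k\<bar> \<le> 1" for x
    proof -
      have "x \<in> linf_space" using that by (auto simp: linf_space_iff)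
      with M show ?thesis by (auto simp: matrix_class_def c0_space_iff convergent_def)
    qed
  qed
  with rows show "(\<forall>n. summable (\<lambda>k. \<bar>M n k\<bar>)) \<and> (\<lambda>n. \<Sum>k. \<bar>M n k\<bar>) \<longlonglongrightarrow> 0" by simp
next
  assume "(\<forall>n. summable (\<lambda>k. \<bar>M n k\<bar>)) \<and> (\<lambda>n. \<Sum>k. \<bar>M n k\<bar>) \<longlonglongrightarrow> 0"
  then have rows: "\<And>n. summable (\<lambda>k. \<bar>M n k\<bar>)"
    and norms: "(\<lambda>n. \<Sum>k. \<bar>M n k - 0\<bar>) \<longlonglongrightarrow> 0" by auto
  note linf_transform_tendsto[where a="\<lambda>_. 0", OF rows _ norms]
  then show "matrix_class linf_space c0_space M"
    by (auto simp: matrix_class_def linf_space_iff c0_space_iff)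
qed

lemma matrix_class_c_c0_iff:
  "matrix_class c_space c0_space M \<longleftrightarrow>
     (\<exists>B. \<forall>n. summable (\<lambda>k. \<bar>M n k\<bar>) \<and> (\<Sum>k. \<bar>M n k\<bar>) \<le> B)
     \<and> (\<forall>k. (\<lambda>n. M n k) \<longlonglongrightarrow> 0) \<and> (\<lambda>n. \<Sum>k. M n k) \<longlonglongrightarrow> 0"
proof
  assume M: "matrix_class c_space c0_space M"
  then have "matrix_class c0_space c0_space M"
    by (rule matrix_class_mono[OF c0_subset_c order_refl])
  then show "(\<exists>B. \<forall>n. summable (\<lambda>k. \<bar>M n k\<bar>) \<and> (\<Sum>k. \<bar>M n k\<bar>) \<le> B)
     \<and> (\<forall>k. (\<lambda>n. M n k) \<longlonglongrightarrow> 0) \<and> (\<lambda>n. \<Sum>k. M n k) \<longlonglongrightarrow> 0"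
    using matrix_class_c0_row_norms_bounded[OF _ c0_subset_linf] matrix_class_row_sums[OF M]
      matrix_class_column[OF M subsetD[OF c0_subset_c unit_seq_in_c0]]
    by (simp add: c0_space_iff)
next
  assume "(\<exists>B. \<forall>n. summable (\<lambda>k. \<bar>M n k\<bar>) \<and> (\<Sum>k. \<bar>M n k\<bar>) \<le> B)
     \<and> (\<forall>k. (\<lambda>n. M n k) \<longlonglongrightarrow> 0) \<and> (\<lambda>n. \<Sum>k. M n k) \<longlonglongrightarrow> 0"
  then obtain B where rows: "\<And>n. summable (\<lambda>k. \<bar>M n k\<bar>)" and B: "\<And>n. (\<Sum>k. \<bar>M n k\<bar>) \<le> B"
    and cols: "\<And>k. (\<lambda>n. M n k) \<longlonglongrightarrow> 0" and row_sums: "(\<lambda>n. \<Sum>k. M n k) \<longlonglongrightarrow> 0" by blast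
  show "matrix_class c_space c0_space M"
  proof (rule matrix_class_c0I)
    fix x assume "x \<in> c_space"
    then obtain l where "x \<longlonglongrightarrow> l" by (auto simp: c_space_iff)
    from c_transform_tendsto[OF rows B cols row_sums this]
    show "(\<forall>n. summable (\<lambda>k. M n k * x k)) \<and> (\<lambda>n. \<Sum>k. M n k * x k) \<longlonglongrightarrow> 0" by simp
  qed
qed

lemma matrix_class_c0_c0_iff:
  "matrix_class c0_space c0_space M \<longleftrightarrow>
     (\<exists>B. \<forall>n. summable (\<lambda>k. \<bar>M n k\<bar>) \<and> (\<Sum>k. \<bar>M n k\<bar>) \<le> B)
     \<and> (\<forall>k. (\<lambda>n. M n k) \<longlonglongrightarrow> 0)"
proof
  assume M: "matrix_class c0_space c0_space M"
  then show "(\<exists>B. \<forall>n. summable (\<lambda>k. \<bar>M n k\<bar>) \<and> (\<Sum>k. \<bar>M n k\<bar>) \<le> B)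
     \<and> (\<forall>k. (\<lambda>n. M n k) \<longlonglongrightarrow> 0)"
    using matrix_class_c0_row_norms_bounded[OF M c0_subset_linf]
      matrix_class_column[OF M unit_seq_in_c0] by (simp add: c0_space_iff)
next
  assume "(\<exists>B. \<forall>n. summable (\<lambda>k. \<bar>M n k\<bar>) \<and> (\<Sum>k. \<bar>M n k\<bar>) \<le> B)
     \<and> (\<forall>k. (\<lambda>n. M n k) \<longlonglongrightarrow> 0)"
  then obtain B where rows: "\<And>n. summable (\<lambda>k. \<bar>M n k\<bar>)" and B: "\<And>n. (\<Sum>k. \<bar>M n k\<bar>) \<le> B"
    and cols: "\<And>k. (\<lambda>n. M n k) \<longlonglongrightarrow> 0" by blast
  show "matrix_class c0_space c0_space M"
    using c0_transform_tendsto[OF rows B cols] by (intro matrix_class_c0I) (simp add: c0_space_iff)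
qed

lemma matrix_class_l1_c0_iff:
  "matrix_class l1_space c0_space M \<longleftrightarrow>
     (\<forall>k. (\<lambda>n. M n k) \<longlonglongrightarrow> 0) \<and> (\<exists>B. \<forall>n k. \<bar>M n k\<bar> \<le> B)"
proof
  assume M: "matrix_class l1_space c0_space M"
  then show "(\<forall>k. (\<lambda>n. M n k) \<longlonglongrightarrow> 0) \<and> (\<exists>B. \<forall>n k. \<bar>M n k\<bar> \<le> B)"
    using matrix_class_l1_entries_bounded[OF M c0_subset_linf]
      matrix_class_column[OF M unit_seq_in_l1] by (simp add: c0_space_iff)
next
  assume "(\<forall>k. (\<lambda>n. M n k) \<longlonglongrightarrow> 0) \<and> (\<exists>B. \<forall>n k. \<bar>M n k\<bar> \<le> B)"
  then obtain B where cols: "\<And>k. (\<lambda>n. M n k) \<longlonglongrightarrow> 0" and B: "\<And>n k. \<bar>M n k\<bar> \<le> B" by blast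
  show "matrix_class l1_space c0_space M"
    using l1_transform_tendsto[OF B cols] by (intro matrix_class_c0I) (simp add: l1_space_iff)
qed

lemma matrix_class_linf_c_iff:
  "matrix_class linf_space c_space M \<longleftrightarrow>
     (\<exists>a. (\<forall>k. (\<lambda>n. M n k) \<longlonglongrightarrow> a k) \<and> (\<forall>n. summable (\<lambda>k. \<bar>M n k\<bar>))
          \<and> summable (\<lambda>k. \<bar>a k\<bar>) \<and> (\<lambda>m. \<Sum>k. \<bar>M m k\<bar>) \<longlonglongrightarrow> (\<Sum>k. \<bar>a k\<bar>))"
proof
  assume M: "matrix_class linf_space c_space M"
  then have "matrix_class c0_space c_space M"
    by (rule matrix_class_mono[OF c0_subset_linf order_refl])
  then obtain B where rows: "\<And>n. summable (\<lambda>k. \<bar>M n k\<bar>)" and B: "\<And>n. (\<Sum>k. \<bar>M n k\<bar>) \<le> B"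
    using matrix_class_c0_row_norms_bounded[OF _ c_subset_linf] by metis
  define a where "a k = lim (\<lambda>n. M n k)" for k
  have cols: "(\<lambda>n. M n k) \<longlonglongrightarrow> a k" for k
    using matrix_class_column[OF M subsetD[OF c0_subset_linf unit_seq_in_c0]]
    by (simp add: c_space_def a_def convergent_LIMSEQ_iff)
  have conv: "convergent (\<lambda>n. \<Sum>k. M n k * x k)" if "\<forall>k. \<bar>x k\<bar> \<le> 1" for x
  proof -
    have "x \<in> linf_space" using that by (auto simp: linf_space_iff)
    with M show ?thesis by (auto simp: matrix_class_def c_space_def)
  qed
  note schur = schur_l1_convergence[OF rows B cols conv]
  have "(\<lambda>n. (\<Sum>k. \<bar>M n k\<bar>) - (\<Sum>k. \<bar>a k\<bar>)) \<longlonglongrightarrow> 0"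
    by (rule Lim_null_comparison[OF _ schur(2)])
      (simp add: abs_diff_suminf_abs_le[OF rows schur(1)])
  then have "(\<lambda>m. \<Sum>k. \<bar>M m k\<bar>) \<longlonglongrightarrow> (\<Sum>k. \<bar>a k\<bar>)" by (simp add: LIM_zero_iff)
  with cols rows schur(1)
  show "\<exists>a. (\<forall>k. (\<lambda>n. M n k) \<longlonglongrightarrow> a k) \<and> (\<forall>n. summable (\<lambda>k. \<bar>M n k\<bar>))
          \<and> summable (\<lambda>k. \<bar>a k\<bar>) \<and> (\<lambda>m. \<Sum>k. \<bar>M m k\<bar>) \<longlonglongrightarrow> (\<Sum>k. \<bar>a k\<bar>)" by blast
next
  assume "\<exists>a. (\<forall>k. (\<lambda>n. M n k) \<longlonglongrightarrow> a k) \<and> (\<forall>n. summable (\<lambda>k. \<bar>M n k\<bar>))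
          \<and> summable (\<lambda>k. \<bar>a k\<bar>) \<and> (\<lambda>m. \<Sum>k. \<bar>M m k\<bar>) \<longlonglongrightarrow> (\<Sum>k. \<bar>a k\<bar>)"
  then obtain a where cols: "\<And>k. (\<lambda>n. M n k) \<longlonglongrightarrow> a k" and rows: "\<And>n. summable (\<lambda>k. \<bar>M n k\<bar>)"
    and a: "summable (\<lambda>k. \<bar>a k\<bar>)" and norms: "(\<lambda>m. \<Sum>k. \<bar>M m k\<bar>) \<longlonglongrightarrow> (\<Sum>k. \<bar>a k\<bar>)"
    by blast
  note l1_conv = l1_norm_diff_tendsto_zero[OF rows cols a norms]
  show "matrix_class linf_space c_space M"
    using linf_transform_tendsto[OF rows a l1_conv]
    by (intro matrix_class_cI[where L="\<lambda>x. \<Sum>k. a k * x k"]) (auto simp: linf_space_iff)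
qed

lemma matrix_class_c_c_iff:
  "matrix_class c_space c_space M \<longleftrightarrow>
     (\<exists>B. \<forall>n. summable (\<lambda>k. \<bar>M n k\<bar>) \<and> (\<Sum>k. \<bar>M n k\<bar>) \<le> B)
     \<and> (\<forall>k. convergent (\<lambda>n. M n k)) \<and> convergent (\<lambda>n. \<Sum>k. M n k)"
proof
  assume M: "matrix_class c_space c_space M"
  then have "matrix_class c0_space c_space M"
    by (rule matrix_class_mono[OF c0_subset_c order_refl])
  then show "(\<exists>B. \<forall>n. summable (\<lambda>k. \<bar>M n k\<bar>) \<and> (\<Sum>k. \<bar>M n k\<bar>) \<le> B)
     \<and> (\<forall>k. convergent (\<lambda>n. M n k)) \<and> convergent (\<lambda>n. \<Sum>k. M n k)"
    using matrix_class_c0_row_norms_bounded[OF _ c_subset_linf] matrix_class_row_sums[OF M]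
      matrix_class_column[OF M subsetD[OF c0_subset_c unit_seq_in_c0]]
    by (simp add: c_space_def)
next
  assume "(\<exists>B. \<forall>n. summable (\<lambda>k. \<bar>M n k\<bar>) \<and> (\<Sum>k. \<bar>M n k\<bar>) \<le> B)
     \<and> (\<forall>k. convergent (\<lambda>n. M n k)) \<and> convergent (\<lambda>n. \<Sum>k. M n k)"
  then obtain B where rows: "\<And>n. summable (\<lambda>k. \<bar>M n k\<bar>)" and B: "\<And>n. (\<Sum>k. \<bar>M n k\<bar>) \<le> B"
    and cols: "\<And>k. (\<lambda>n. M n k) \<longlonglongrightarrow> lim (\<lambda>n. M n k)"
    and row_sums: "(\<lambda>n. \<Sum>k. M n k) \<longlonglongrightarrow> lim (\<lambda>n. \<Sum>k. M n k)"
    by (auto simp: convergent_LIMSEQ_iff)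
  show "matrix_class c_space c_space M"
  proof (rule matrix_class_cI)
    fix x assume "x \<in> c_space"
    then have "x \<longlonglongrightarrow> lim x" by (simp add: c_space_def convergent_LIMSEQ_iff)
    from c_transform_tendsto[OF rows B cols row_sums this]
    show "(\<forall>n. summable (\<lambda>k. M n k * x k)) \<and> (\<lambda>n. \<Sum>k. M n k * x k) \<longlonglongrightarrow>
      lim x * lim (\<lambda>n. \<Sum>k. M n k) + (\<Sum>k. lim (\<lambda>n. M n k) * (x k - lim x))" .
  qed
qed

lemma matrix_class_c0_c_iff:
  "matrix_class c0_space c_space M \<longleftrightarrow>
     (\<exists>B. \<forall>n. summable (\<lambda>k. \<bar>M n k\<bar>) \<and> (\<Sum>k. \<bar>M n k\<bar>) \<le> B)
     \<and> (\<forall>k. convergent (\<lambda>n. M n k))"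
proof
  assume M: "matrix_class c0_space c_space M"
  then show "(\<exists>B. \<forall>n. summable (\<lambda>k. \<bar>M n k\<bar>) \<and> (\<Sum>k. \<bar>M n k\<bar>) \<le> B)
     \<and> (\<forall>k. convergent (\<lambda>n. M n k))"
    using matrix_class_c0_row_norms_bounded[OF M c_subset_linf]
      matrix_class_column[OF M unit_seq_in_c0] by (simp add: c_space_def)
next
  assume "(\<exists>B. \<forall>n. summable (\<lambda>k. \<bar>M n k\<bar>) \<and> (\<Sum>k. \<bar>M n k\<bar>) \<le> B)
     \<and> (\<forall>k. convergent (\<lambda>n. M n k))"
  then obtain B where rows: "\<And>n. summable (\<lambda>k. \<bar>M n k\<bar>)" and B: "\<And>n. (\<Sum>k. \<bar>M n k\<bar>) \<le> B"
    and cols: "\<And>k. (\<lambda>n. M n k) \<longlonglongrightarrow> lim (\<lambda>n. M n k)"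
    by (auto simp: convergent_LIMSEQ_iff)
  show "matrix_class c0_space c_space M"
    using c0_transform_tendsto[OF rows B cols]
    by (intro matrix_class_cI[where L="\<lambda>x. \<Sum>k. lim (\<lambda>n. M n k) * x k"]) (simp add: c0_space_iff)
qed

lemma matrix_class_l1_c_iff:
  "matrix_class l1_space c_space M \<longleftrightarrow>
     (\<forall>k. convergent (\<lambda>n. M n k)) \<and> (\<exists>B. \<forall>n k. \<bar>M n k\<bar> \<le> B)"
proof
  assume M: "matrix_class l1_space c_space M"
  then show "(\<forall>k. convergent (\<lambda>n. M n k)) \<and> (\<exists>B. \<forall>n k. \<bar>M n k\<bar> \<le> B)"
    using matrix_class_l1_entries_bounded[OF M c_subset_linf]
      matrix_class_column[OF M unit_seq_in_l1] by (simp add: c_space_def)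
next
  assume "(\<forall>k. convergent (\<lambda>n. M n k)) \<and> (\<exists>B. \<forall>n k. \<bar>M n k\<bar> \<le> B)"
  then obtain B where cols: "\<And>k. (\<lambda>n. M n k) \<longlonglongrightarrow> lim (\<lambda>n. M n k)"
    and B: "\<And>n k. \<bar>M n k\<bar> \<le> B" by (auto simp: convergent_LIMSEQ_iff)
  show "matrix_class l1_space c_space M"
    using l1_transform_tendsto[OF B cols]
    by (intro matrix_class_cI[where L="\<lambda>x. \<Sum>k. lim (\<lambda>n. M n k) * x k"]) (simp add: l1_space_iff)
qed

theorem corollary2:
  fixes \<alpha> :: real and u :: "nat \<Rightarrow> real" and A :: "nat \<Rightarrow> nat \<Rightarrow> real"
  assumes "0 < \<alpha>" and "\<alpha> < 1" and "\<forall>k. u k \<noteq> 0"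
  defines "b \<equiv> B_matrix \<alpha> u A"
  shows
   "(matrix_class linf_space (gen_space c0_space \<alpha> u) A \<longleftrightarrow>
       (\<forall>n. summable (\<lambda>k. \<bar>b n k\<bar>)) \<and> (\<lambda>n. \<Sum>k. \<bar>b n k\<bar>) \<longlonglongrightarrow> 0)
    \<and> (matrix_class c_space (gen_space c0_space \<alpha> u) A \<longleftrightarrow>
       (\<exists>M. \<forall>n. summable (\<lambda>k. \<bar>b n k\<bar>) \<and> (\<Sum>k. \<bar>b n k\<bar>) \<le> M)
       \<and> (\<forall>k. (\<lambda>n. b n k) \<longlonglongrightarrow> 0)
       \<and> (\<lambda>n. \<Sum>k. b n k) \<longlonglongrightarrow> 0)
    \<and> (matrix_class c0_space (gen_space c0_space \<alpha> u) A \<longleftrightarrow>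
       (\<exists>M. \<forall>n. summable (\<lambda>k. \<bar>b n k\<bar>) \<and> (\<Sum>k. \<bar>b n k\<bar>) \<le> M)
       \<and> (\<forall>k. (\<lambda>n. b n k) \<longlonglongrightarrow> 0))
    \<and> (matrix_class l1_space (gen_space c0_space \<alpha> u) A \<longleftrightarrow>
       (\<forall>k. (\<lambda>n. b n k) \<longlonglongrightarrow> 0)
       \<and> (\<exists>M. \<forall>n k. \<bar>b n k\<bar> \<le> M))
    \<and> (matrix_class linf_space (gen_space c_space \<alpha> u) A \<longleftrightarrow>
       (\<exists>a. (\<forall>k. (\<lambda>n. b n k) \<longlonglongrightarrow> a k)
          \<and> (\<forall>n. summable (\<lambda>k. \<bar>b n k\<bar>))
          \<and> summable (\<lambda>k. \<bar>a k\<bar>)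
          \<and> (\<lambda>m. \<Sum>k. \<bar>b m k\<bar>) \<longlonglongrightarrow> (\<Sum>k. \<bar>a k\<bar>)))
    \<and> (matrix_class c_space (gen_space c_space \<alpha> u) A \<longleftrightarrow>
       (\<exists>M. \<forall>n. summable (\<lambda>k. \<bar>b n k\<bar>) \<and> (\<Sum>k. \<bar>b n k\<bar>) \<le> M)
       \<and> (\<forall>k. convergent (\<lambda>n. b n k))
       \<and> convergent (\<lambda>n. \<Sum>k. b n k))
    \<and> (matrix_class c0_space (gen_space c_space \<alpha> u) A \<longleftrightarrow>
       (\<exists>M. \<forall>n. summable (\<lambda>k. \<bar>b n k\<bar>) \<and> (\<Sum>k. \<bar>b n k\<bar>) \<le> M)
       \<and> (\<forall>k. convergent (\<lambda>n. b n k)))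
    \<and> (matrix_class l1_space (gen_space c_space \<alpha> u) A \<longleftrightarrow>
       (\<forall>k. convergent (\<lambda>n. b n k))
       \<and> (\<exists>M. \<forall>n k. \<bar>b n k\<bar> \<le> M))"
proof -
  have "0 < Gamma (\<alpha> + 1)" using assms(1) by (intro Gamma_real_pos) simp
  then have "frac_coeff \<alpha> 0 = 1" by (intro frac_coeff_0) linarith
  note reduction = matrix_class_gen_space_iff[OF this assms(3)]
  show ?thesis
    unfolding reduction b_def
    by (intro conjI matrix_class_linf_c0_iff matrix_class_c_c0_iff matrix_class_c0_c0_iff
        matrix_class_l1_c0_iff matrix_class_linf_c_iff matrix_class_c_c_iff matrix_class_c0_c_iff
        matrix_class_l1_c_iff)
qed

end
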